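(* In the setting described in the context, let $\mathbf W^\diamond=[\mathbf W_c^\diamond,\mathbf W_s^\diamond]$ be a stationary point of the problem $\max\{f(\mathbf W):\mathrm{tr}(\mathbf W\mathbf W^H)\le P_t\}$ with associated Lagrange multiplier $\mu^\diamond\in\mathbb R$, i.e., $\nabla_{\mathbf W}\mathcal L(\mathbf W^\diamond,\mu^\diamond)=\mathbf 0$ where $\mathcal L(\mathbf W,\mu)=f(\mathbf W)-\mu(\mathrm{tr}(\mathbf W\mathbf W^H)-P_t)$, and let $\bm\Sigma_1^\diamond,\bm\Sigma_2^\diamond,\mathbf Q^\diamond$ be the quantities of the context evaluated at $\mathbf W^\diamond$. Then $$\Big(\tfrac12\delta_s(\mathbf Q^\diamond+\mathbf Q^{\diamond H})-\delta_c\mathbf H\bm\Sigma_2^\diamond\mathbf H^H\Big)\mathbf W_s^\diamond=\mu^\diamond\mathbf W_s^\diamond,$$ and, provided the matrix $\mu^\diamond\mathbf I+\delta_c\mathbf H\bm\Sigma_2^\diamond\mathbf H^H-\frac12\delta_s(\mathbf Q^\diamond+\mathbf Q^{\diamond H})$ is invertible, $$\mathbf W_c^\diamond=\Big(\mu^\diamond\mathbf I+\delta_c\mathbf H\bm\Sigma_2^\diamond\mathbf H^H-\tfrac12\delta_s(\mathbf Q^\diamond+\mathbf Q^{\diamond H})\Big)^{-1}\delta_c\mathbf H\bm\Sigma_1^{\diamond H}.$$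
   Context: Positive integers $N_t,N_r,K,M,L$, nonnegative integer $N_s$; channels $\mathbf h_k\in\mathbb C^{N_t}$, $\mathbf H=[\mathbf h_1,\dots,\mathbf h_K]$, noise variances $\sigma_{ck}^2>0$; $\sigma_s^2>0$; weights $\delta_c,\delta_s\ge0$; $P_t>0$. $\mathbf W=[\mathbf W_c,\mathbf W_s]\in\mathbb C^{N_t\times(K+N_s)}$, $\mathbf W_c=[\mathbf w_{c1},\dots,\mathbf w_{cK}]$, $\mathbf R_x=\mathbf W\mathbf W^H$. Rate $R_k(\mathbf W)=\log(1+|\mathbf h_k^H\mathbf w_{ck}|^2/I_k)$, $I_k=\sum_{j\ne k}|\mathbf h_k^H\mathbf w_{cj}|^2+\|\mathbf h_k^H\mathbf W_s\|_F^2+\sigma_{ck}^2$. Sensing model: differentiable $\mathbf a:\mathbb R^2\to\mathbb C^{N_t}$, $\mathbf b:\mathbb R^2\to\mathbb C^{N_r}$; parameters $\theta_m,\phi_m\in\mathbb R,\alpha_m\in\mathbb C$; $\mathbf A=[\mathbf a(\theta_m,\phi_m)]_m$, $\mathbf B=[\mathbf b(\theta_m,\phi_m)]_m$, $\mathbf U=\mathrm{diag}(\alpha_m)$; $\dot{\mathbf A}_\theta,\dot{\mathbf A}_\phi,\dot{\mathbf B}_\theta,\dot{\mathbf B}_\phi$ have $m$-th columns the partial derivatives of $\mathbf a$ resp. $\mathbf b$ w.r.t. first resp. second argument at $(\theta_m,\phi_m)$. $\mathbf F(\mathbf W)=\frac{2L}{\sigma_s^2}\begin{bmatrix}\Re\mathbf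 F_{11}&\Re\mathbf F_{12}&\Re\mathbf F_{13}&-\Im\mathbf F_{13}\\ \Re\mathbf F_{12}^{\mathsf T}&\Re\mathbf F_{22}&\Re\mathbf F_{23}&-\Im\mathbf F_{23}\\ \Re\mathbf F_{13}^{\mathsf T}&\Re\mathbf F_{23}^{\mathsf T}&\Re\mathbf F_{33}&-\Im\mathbf F_{33}\\ -\Im\mathbf F_{13}^{\mathsf T}&-\Im\mathbf F_{23}^{\mathsf T}&-\Im\mathbf F_{33}^{\mathsf T}&\Re\mathbf F_{33}\end{bmatrix}$ with $\mathbf F_{11}=(\mathbf U\mathbf A^H\mathbf R_x\mathbf A\mathbf U^H)^{\mathsf T}\odot(\dot{\mathbf B}_\theta^H\dot{\mathbf B}_\theta)+(\mathbf U\mathbf A^H\mathbf R_x\dot{\mathbf A}_\theta\mathbf U^H)^{\mathsf T}\odot(\mathbf B^H\dot{\mathbf B}_\theta)+(\mathbf U\dot{\mathbf A}_\theta^H\mathbf R_x\mathbf A\mathbf U^H)^{\mathsf T}\odot(\dot{\mathbf B}_\theta^H\mathbf B)+(\mathbf U\dot{\mathbf A}_\theta^H\mathbf R_x\dot{\mathbf A}_\theta\mathbf U^H)^{\mathsf T}\odot(\mathbf B^H\mathbf B)$; $\mathbf F_{12}=(\mathbf U\mathbf A^H\mathbf R_x\mathbf A\mathbf U^H)^{\mathsf T}\odot(\dot{\mathbf B}_\theta^H\dot{\mathbf B}_\phi)+(\mathbf U\mathbf A^H\mathbf R_x\dot{\mathbf A}_\theta\mathbf U^H)^{\mathsf T}\odot(\mathbf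 B^H\dot{\mathbf B}_\phi)+(\mathbf U\dot{\mathbf A}_\phi^H\mathbf R_x\mathbf A\mathbf U^H)^{\mathsf T}\odot(\dot{\mathbf B}_\theta^H\mathbf B)+(\mathbf U\dot{\mathbf A}_\phi^H\mathbf R_x\dot{\mathbf A}_\theta\mathbf U^H)^{\mathsf T}\odot(\mathbf B^H\mathbf B)$; $\mathbf F_{22}$ = $\mathbf F_{11}$ with $\theta\to\phi$; $\mathbf F_{13}=(\mathbf A^H\mathbf R_x\mathbf A\mathbf U^H)^{\mathsf T}\odot(\dot{\mathbf B}_\theta^H\mathbf B)+(\mathbf A^H\mathbf R_x\dot{\mathbf A}_\theta\mathbf U^H)^{\mathsf T}\odot(\mathbf B^H\mathbf B)$; $\mathbf F_{23}$ = $\mathbf F_{13}$ with $\theta\to\phi$; $\mathbf F_{33}=(\mathbf A^H\mathbf R_x\mathbf A)^{\mathsf T}\odot(\mathbf B^H\mathbf B)$. $f(\mathbf W)=\delta_c\sum_kR_k(\mathbf W)-\delta_s\mathrm{tr}(\mathbf F(\mathbf W)^{-1})$ ($\mathbf F$ assumed invertible at the points considered). Gradient convention: $\nabla g=\partial g/\partial\Re\mathbf W+\mathrm j\,\partial g/\partial\Im\mathbf W$. Quantities at $\mathbf W$: $T_k=I_k+|\mathbf h_k^H\mathbf w_{ck}|^2$, $\xi_k=|\mathbf h_k^H\mathbf w_{ck}|^2/I_k$, $\eta_k=\overline{\mathbf h_k^H\mathbf w_{ck}}/I_k$, $\beta_k=\xi_k/T_k$, $\bm\Sigma_1=\mathrm{diag}(\eta_k)$,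 $\bm\Sigma_2=\mathrm{diag}(\beta_k)$; $\bm\Phi=\mathbf F(\mathbf W)^{-2}$ with $M\times M$ blocks $\bm\Phi_{pq}$; $\mathbf Q_{11}=\mathbf A\mathbf U^H(\bm\Phi_{11}\odot\dot{\mathbf B}_\theta^H\dot{\mathbf B}_\theta)\mathbf U\mathbf A^H+\dot{\mathbf A}_\theta\mathbf U^H(\bm\Phi_{11}\odot\mathbf B^H\dot{\mathbf B}_\theta)\mathbf U\mathbf A^H+\mathbf A\mathbf U^H(\bm\Phi_{11}\odot\dot{\mathbf B}_\theta^H\mathbf B)\mathbf U\dot{\mathbf A}_\theta^H+\dot{\mathbf A}_\theta\mathbf U^H(\bm\Phi_{11}\odot\mathbf B^H\mathbf B)\mathbf U\dot{\mathbf A}_\theta^H$; $\mathbf Q_{12}=2[\mathbf A\mathbf U^H(\bm\Phi_{12}\odot\dot{\mathbf B}_\theta^H\dot{\mathbf B}_\phi)\mathbf U\mathbf A^H+\dot{\mathbf A}_\theta\mathbf U^H(\bm\Phi_{12}\odot\mathbf B^H\dot{\mathbf B}_\phi)\mathbf U\mathbf A^H+\mathbf A\mathbf U^H(\bm\Phi_{12}\odot\dot{\mathbf B}_\theta^H\mathbf B)\mathbf U\dot{\mathbf A}_\phi^H+\dot{\mathbf A}_\theta\mathbf U^H(\bm\Phi_{12}\odot\mathbf B^H\mathbf B)\mathbf U\dot{\mathbf A}_\phi^H]$; $\mathbf Q_{22}$ = $\mathbf Q_{11}$ with $\bm\Phi_{11}\to\bm\Phi_{22}$, $\theta\to\phi$;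 $\mathbf Q_{13}=\mathbf A\mathbf U^H((2\bm\Phi_{13}+2\mathrm j\bm\Phi_{14})\odot\dot{\mathbf B}_\theta^H\mathbf B)\mathbf A^H+\dot{\mathbf A}_\theta\mathbf U^H((2\bm\Phi_{13}+2\mathrm j\bm\Phi_{14})\odot\mathbf B^H\mathbf B)\mathbf A^H$; $\mathbf Q_{23}$ = $\mathbf Q_{13}$ with $\bm\Phi_{13},\bm\Phi_{14}\to\bm\Phi_{23},\bm\Phi_{24}$, $\theta\to\phi$; $\mathbf Q_{33}=\mathbf A((\bm\Phi_{33}+\bm\Phi_{44}+2\mathrm j\bm\Phi_{34})\odot\mathbf B^H\mathbf B)\mathbf A^H$; $\mathbf Q=\frac{2L}{\sigma_s^2}(\mathbf Q_{11}+\mathbf Q_{12}+\mathbf Q_{13}+\mathbf Q_{22}+\mathbf Q_{23}+\mathbf Q_{33})$; $\mathrm j$ imaginary unit. *)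

theory Defs
  imports "HOL-Analysis.Analysis"
    "Jordan_Normal_Form.Gauss_Jordan_Elimination"
    "Jordan_Normal_Form.Schur_Decomposition"
begin

abbreviation cH :: "complex mat \<Rightarrow> complex mat" where
  "cH A \<equiv> mat_adjoint A"

definition hadamard :: "'a::times mat \<Rightarrow> 'a mat \<Rightarrow> 'a mat" (infixl "\<odot>" 71) where
  "A \<odot> B = mat (dim_row A) (dim_col A) (\<lambda>(i,j). A $$ (i,j) * B $$ (i,j))"

definition mtrace :: "'a::comm_ring_1 mat \<Rightarrow> 'a" where
  "mtrace A = (\<Sum>i<dim_row A. A $$ (i,i))"

text \<open>Matrix inverse (only used at invertible matrices).\<close>
definition minv :: "'a::field mat \<Rightarrow> 'a mat" where
  "minv A = the (mat_inverse A)"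

definition Re_mat :: "complex mat \<Rightarrow> real mat" where
  "Re_mat A = map_mat Re A"

definition Im_mat :: "complex mat \<Rightarrow> real mat" where
  "Im_mat A = map_mat Im A"

definition cmat :: "real mat \<Rightarrow> complex mat" where
  "cmat A = map_mat complex_of_real A"

definition diagc :: "nat \<Rightarrow> (nat \<Rightarrow> complex) \<Rightarrow> complex mat" where
  "diagc n d = mat n n (\<lambda>(i,j). if i = j then d i else 0)"

definition block4 :: "nat \<Rightarrow> real mat list list \<Rightarrow> real mat" where
  "block4 M bl = mat (4*M) (4*M) (\<lambda>(i,j). (bl ! (i div M) ! (j div M)) $$ (i mod M, j mod M))"

text \<open>Block (p,q) of a 4M x 4M matrix, with 1-based block indices p,q as in the paper.\<close>
definition blk :: "nat \<Rightarrow> real mat \<Rightarrow> nat \<Rightarrow> nat \<Rightarrow> real mat" where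
  "blk M Phi p q = mat M M (\<lambda>(r,c). Phi $$ ((p-1)*M + r, (q-1)*M + c))"

definition Wc_of :: "nat \<Rightarrow> complex mat \<Rightarrow> complex mat" where
  "Wc_of K W = mat (dim_row W) K (\<lambda>(i,j). W $$ (i,j))"

definition Ws_of :: "nat \<Rightarrow> complex mat \<Rightarrow> complex mat" where
  "Ws_of K W = mat (dim_row W) (dim_col W - K) (\<lambda>(i,j). W $$ (i, K + j))"

text \<open>h_k^H w_j = (H^H W)_{kj}, h_k the k-th column of H.\<close>
definition hw :: "complex mat \<Rightarrow> complex mat \<Rightarrow> nat \<Rightarrow> nat \<Rightarrow> complex" where
  "hw H W k j = (cH H * W) $$ (k,j)"

text \<open>Interference-plus-noise I_k; sc2 k is the noise variance sigma_ck^2.\<close>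
definition Iint :: "nat \<Rightarrow> complex mat \<Rightarrow> (nat \<Rightarrow> real) \<Rightarrow> complex mat \<Rightarrow> nat \<Rightarrow> real" where
  "Iint K H sc2 W k =
     (\<Sum>j\<in>{..<K} - {k}. (cmod (hw H (Wc_of K W) k j))^2)
     + (\<Sum>j<dim_col (Ws_of K W). (cmod (hw H (Ws_of K W) k j))^2)
     + sc2 k"

definition rate :: "nat \<Rightarrow> complex mat \<Rightarrow> (nat \<Rightarrow> real) \<Rightarrow> complex mat \<Rightarrow> nat \<Rightarrow> real" where
  "rate K H sc2 W k = ln (1 + (cmod (hw H (Wc_of K W) k k))^2 / Iint K H sc2 W k)"

definition Tk :: "nat \<Rightarrow> complex mat \<Rightarrow> (nat \<Rightarrow> real) \<Rightarrow> complex mat \<Rightarrow> nat \<Rightarrow> real" where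
  "Tk K H sc2 W k = Iint K H sc2 W k + (cmod (hw H (Wc_of K W) k k))^2"

definition xi :: "nat \<Rightarrow> complex mat \<Rightarrow> (nat \<Rightarrow> real) \<Rightarrow> complex mat \<Rightarrow> nat \<Rightarrow> real" where
  "xi K H sc2 W k = (cmod (hw H (Wc_of K W) k k))^2 / Iint K H sc2 W k"

definition eta :: "nat \<Rightarrow> complex mat \<Rightarrow> (nat \<Rightarrow> real) \<Rightarrow> complex mat \<Rightarrow> nat \<Rightarrow> complex" where
  "eta K H sc2 W k = cnj (hw H (Wc_of K W) k k) / complex_of_real (Iint K H sc2 W k)"

definition beta :: "nat \<Rightarrow> complex mat \<Rightarrow> (nat \<Rightarrow> real) \<Rightarrow> complex mat \<Rightarrow> nat \<Rightarrow> real" where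
  "beta K H sc2 W k = xi K H sc2 W k / Tk K H sc2 W k"

definition Sigma1 :: "nat \<Rightarrow> complex mat \<Rightarrow> (nat \<Rightarrow> real) \<Rightarrow> complex mat \<Rightarrow> complex mat" where
  "Sigma1 K H sc2 W = diagc K (eta K H sc2 W)"

definition Sigma2 :: "nat \<Rightarrow> complex mat \<Rightarrow> (nat \<Rightarrow> real) \<Rightarrow> complex mat \<Rightarrow> complex mat" where
  "Sigma2 K H sc2 W = diagc K (\<lambda>k. complex_of_real (beta K H sc2 W k))"

text \<open>Steering vectors given componentwise: a i th ph is the i-th entry of a(th,ph).\<close>
definition steer :: "nat \<Rightarrow> nat \<Rightarrow> (nat \<Rightarrow> real \<Rightarrow> real \<Rightarrow> complex) \<Rightarrow> (nat \<Rightarrow> real) \<Rightarrow> (nat \<Rightarrow> real) \<Rightarrow> complex mat" where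
  "steer N M a th ph = mat N M (\<lambda>(i,m). a i (th m) (ph m))"

definition steer_dth :: "nat \<Rightarrow> nat \<Rightarrow> (nat \<Rightarrow> real \<Rightarrow> real \<Rightarrow> complex) \<Rightarrow> (nat \<Rightarrow> real) \<Rightarrow> (nat \<Rightarrow> real) \<Rightarrow> complex mat" where
  "steer_dth N M a th ph = mat N M (\<lambda>(i,m). vector_derivative (\<lambda>t. a i t (ph m)) (at (th m)))"

definition steer_dph :: "nat \<Rightarrow> nat \<Rightarrow> (nat \<Rightarrow> real \<Rightarrow> real \<Rightarrow> complex) \<Rightarrow> (nat \<Rightarrow> real) \<Rightarrow> (nat \<Rightarrow> real) \<Rightarrow> complex mat" where
  "steer_dph N M a th ph = mat N M (\<lambda>(i,m). vector_derivative (\<lambda>t. a i (th m) t) (at (ph m)))"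

record sensing =
  sA :: "complex mat"  sAt :: "complex mat"  sAp :: "complex mat"
  sB :: "complex mat"  sBt :: "complex mat"  sBp :: "complex mat"
  sU :: "complex mat"

definition sensing_of ::
  "nat \<Rightarrow> nat \<Rightarrow> nat \<Rightarrow> (nat \<Rightarrow> real \<Rightarrow> real \<Rightarrow> complex) \<Rightarrow> (nat \<Rightarrow> real \<Rightarrow> real \<Rightarrow> complex)
   \<Rightarrow> (nat \<Rightarrow> real) \<Rightarrow> (nat \<Rightarrow> real) \<Rightarrow> (nat \<Rightarrow> complex) \<Rightarrow> sensing" where
  "sensing_of Nt Nr M a b th ph al =
    \<lparr> sA = steer Nt M a th ph, sAt = steer_dth Nt M a th ph, sAp = steer_dph Nt M a th ph,
      sB = steer Nr M b th ph, sBt = steer_dth Nr M b th ph, sBp = steer_dph Nr M b th ph,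
      sU = diagc M al \<rparr>"

text \<open>F_11 (with Ad = dA_theta, Bd = dB_theta); F_22 is the same with phi-derivatives.\<close>
definition F11g :: "sensing \<Rightarrow> complex mat \<Rightarrow> complex mat \<Rightarrow> complex mat \<Rightarrow> complex mat" where
  "F11g S Rx Ad Bd = (let A = sA S; B = sB S; U = sU S in
      transpose_mat (U * cH A * Rx * A * cH U) \<odot> (cH Bd * Bd)
    + transpose_mat (U * cH A * Rx * Ad * cH U) \<odot> (cH B * Bd)
    + transpose_mat (U * cH Ad * Rx * A * cH U) \<odot> (cH Bd * B)
    + transpose_mat (U * cH Ad * Rx * Ad * cH U) \<odot> (cH B * B))"

definition F12m :: "sensing \<Rightarrow> complex mat \<Rightarrow> complex mat" where
  "F12m S Rx = (let A = sA S; B = sB S; U = sU S; At = sAt S; Ap = sAp S; Bt = sBt S; Bp = sBp S in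
      transpose_mat (U * cH A * Rx * A * cH U) \<odot> (cH Bt * Bp)
    + transpose_mat (U * cH A * Rx * At * cH U) \<odot> (cH B * Bp)
    + transpose_mat (U * cH Ap * Rx * A * cH U) \<odot> (cH Bt * B)
    + transpose_mat (U * cH Ap * Rx * At * cH U) \<odot> (cH B * B))"

definition F13g :: "sensing \<Rightarrow> complex mat \<Rightarrow> complex mat \<Rightarrow> complex mat \<Rightarrow> complex mat" where
  "F13g S Rx Ad Bd = (let A = sA S; B = sB S; U = sU S in
      transpose_mat (cH A * Rx * A * cH U) \<odot> (cH Bd * B)
    + transpose_mat (cH A * Rx * Ad * cH U) \<odot> (cH B * B))"

definition F33m :: "sensing \<Rightarrow> complex mat \<Rightarrow> complex mat" where
  "F33m S Rx = transpose_mat (cH (sA S) * Rx * sA S) \<odot> (cH (sB S) * sB S)"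

definition FIM :: "nat \<Rightarrow> nat \<Rightarrow> real \<Rightarrow> sensing \<Rightarrow> complex mat \<Rightarrow> real mat" where
  "FIM M L ss2 S W = (let Rx = W * cH W;
      F11 = F11g S Rx (sAt S) (sBt S); F22 = F11g S Rx (sAp S) (sBp S);
      F12 = F12m S Rx;
      F13 = F13g S Rx (sAt S) (sBt S); F23 = F13g S Rx (sAp S) (sBp S);
      F33 = F33m S Rx;
      T = transpose_mat in
    (2 * real L / ss2) \<cdot>\<^sub>m block4 M
      [[Re_mat F11, Re_mat F12, Re_mat F13, - Im_mat F13],
       [T (Re_mat F12), Re_mat F22, Re_mat F23, - Im_mat F23],
       [T (Re_mat F13), T (Re_mat F23), Re_mat F33, - Im_mat F33],
       [- T (Im_mat F13), - T (Im_mat F23), - T (Im_mat F33), Re_mat F33]])"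

definition fobj :: "nat \<Rightarrow> complex mat \<Rightarrow> (nat \<Rightarrow> real) \<Rightarrow> nat \<Rightarrow> nat \<Rightarrow> real \<Rightarrow> sensing
   \<Rightarrow> real \<Rightarrow> real \<Rightarrow> complex mat \<Rightarrow> real" where
  "fobj K H sc2 M L ss2 S dc ds W =
     dc * (\<Sum>k<K. rate K H sc2 W k) - ds * mtrace (minv (FIM M L ss2 S W))"

definition Lag :: "nat \<Rightarrow> complex mat \<Rightarrow> (nat \<Rightarrow> real) \<Rightarrow> nat \<Rightarrow> nat \<Rightarrow> real \<Rightarrow> sensing
   \<Rightarrow> real \<Rightarrow> real \<Rightarrow> real \<Rightarrow> complex mat \<Rightarrow> real \<Rightarrow> real" where
  "Lag K H sc2 M L ss2 S dc ds Pt W mu =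
     fobj K H sc2 M L ss2 S dc ds W - mu * (Re (mtrace (W * cH W)) - Pt)"

definition unitm :: "nat \<Rightarrow> nat \<Rightarrow> nat \<Rightarrow> nat \<Rightarrow> complex mat" where
  "unitm n m i j = mat n m (\<lambda>p. if p = (i,j) then 1 else 0)"

text \<open>Gradient (d/d Re W + j d/d Im W) of a real function g of W (n x m) vanishes at W:
  all real partial derivatives w.r.t. real and imaginary parts of each entry exist and are 0.\<close>
definition grad_zero :: "nat \<Rightarrow> nat \<Rightarrow> (complex mat \<Rightarrow> real) \<Rightarrow> complex mat \<Rightarrow> bool" where
  "grad_zero n m g W \<longleftrightarrow> (\<forall>i<n. \<forall>j<m.
     ((\<lambda>t. g (W + complex_of_real t \<cdot>\<^sub>m unitm n m i j)) has_real_derivative 0) (at 0) \<and>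
     ((\<lambda>t. g (W + (\<i> * complex_of_real t) \<cdot>\<^sub>m unitm n m i j)) has_real_derivative 0) (at 0))"

definition Q11g :: "sensing \<Rightarrow> complex mat \<Rightarrow> complex mat \<Rightarrow> complex mat \<Rightarrow> complex mat" where
  "Q11g S P Ad Bd = (let A = sA S; B = sB S; U = sU S in
      A * cH U * (P \<odot> (cH Bd * Bd)) * U * cH A
    + Ad * cH U * (P \<odot> (cH B * Bd)) * U * cH A
    + A * cH U * (P \<odot> (cH Bd * B)) * U * cH Ad
    + Ad * cH U * (P \<odot> (cH B * B)) * U * cH Ad)"

definition Q12m :: "sensing \<Rightarrow> complex mat \<Rightarrow> complex mat" where
  "Q12m S P = (let A = sA S; B = sB S; U = sU S; At = sAt S; Ap = sAp S; Bt = sBt S; Bp = sBp S in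
    2 \<cdot>\<^sub>m (A * cH U * (P \<odot> (cH Bt * Bp)) * U * cH A
    + At * cH U * (P \<odot> (cH B * Bp)) * U * cH A
    + A * cH U * (P \<odot> (cH Bt * B)) * U * cH Ap
    + At * cH U * (P \<odot> (cH B * B)) * U * cH Ap))"

definition Q13g :: "sensing \<Rightarrow> complex mat \<Rightarrow> complex mat \<Rightarrow> complex mat \<Rightarrow> complex mat \<Rightarrow> complex mat" where
  "Q13g S P3 P4 Ad Bd = (let A = sA S; B = sB S; U = sU S; P = 2 \<cdot>\<^sub>m P3 + (2 * \<i>) \<cdot>\<^sub>m P4 in
      A * cH U * (P \<odot> (cH Bd * B)) * cH A
    + Ad * cH U * (P \<odot> (cH B * B)) * cH A)"

definition Q33m :: "sensing \<Rightarrow> complex mat \<Rightarrow> complex mat \<Rightarrow> complex mat \<Rightarrow> complex mat" where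
  "Q33m S P33 P44 P34 = sA S * ((P33 + P44 + (2 * \<i>) \<cdot>\<^sub>m P34) \<odot> (cH (sB S) * sB S)) * cH (sA S)"

definition Qmat :: "nat \<Rightarrow> nat \<Rightarrow> real \<Rightarrow> sensing \<Rightarrow> complex mat \<Rightarrow> complex mat" where
  "Qmat M L ss2 S W = (let Finv = minv (FIM M L ss2 S W); Phi = Finv * Finv;
      P = (\<lambda>p q. cmat (blk M Phi p q)) in
    complex_of_real (2 * real L / ss2) \<cdot>\<^sub>m
      (Q11g S (P 1 1) (sAt S) (sBt S) + Q12m S (P 1 2) + Q13g S (P 1 3) (P 1 4) (sAt S) (sBt S)
     + Q11g S (P 2 2) (sAp S) (sBp S) + Q13g S (P 2 3) (P 2 4) (sAp S) (sBp S)
     + Q33m S (P 3 3) (P 4 4) (P 3 4)))"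

end

theory Submission
  imports Defs
begin

(* Stationarity is evaluated entry by entry: differentiating the Lagrangian along W + c t E_ij for
   c = 1 and for c the imaginary unit gives the real and imaginary parts of one complex gradient entry.
   The rates enter through R_k = ln T_k - ln I_k, both sums of squared moduli of entries of H^H W.
   The Fisher matrix is (2L/sigma_s^2) G(W W^H) with G real-linear, so along the perturbation it is
   quadratic in t, and d/dt tr F^-1 = - tr(F^-1 dF F^-1) = - tr(Phi dF) with Phi = F^-2.  The matrix Q is exactly the
   adjoint of G for this pairing, tr(Phi G(R)) = Re tr(Q R).  Collecting terms, the gradient entry is
   2 ([j < K] (delta_c H Sigma_1^H)_ij - (X W)_ij) with X = mu I + delta_c H Sigma_2 H^H - delta_s/2 (Q + Q^H);
   the columns j >= K give the equation for W_s, the columns j < K the one for W_c. *)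

lemma mat_adjoint_dims [simp]: "dim_row (cH A) = dim_col A" "dim_col (cH A) = dim_row A"
  by (auto simp: mat_adjoint_def)

lemma index_mat_adjoint [simp]:
  "i < dim_col A \<Longrightarrow> j < dim_row A \<Longrightarrow> cH A $$ (i,j) = cnj (A $$ (j,i))"
  by (simp add: mat_adjoint_def mat_of_rows_index)

lemma mat_adjoint_carrier [simp]: "A \<in> carrier_mat n m \<Longrightarrow> cH A \<in> carrier_mat m n"
  by auto

lemma mat_adjoint_adjoint [simp]: "cH (cH A) = A"
  by (rule eq_matI) auto

lemma mat_adjoint_one [simp]: "cH (1\<^sub>m n) = 1\<^sub>m n"
  by (rule eq_matI) auto

lemma index_mult_mat_sum:
  "i < dim_row A \<Longrightarrow> j < dim_col B \<Longrightarrow> dim_col A = dim_row B \<Longrightarrow>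
   (A * B) $$ (i,j) = (\<Sum>k<dim_row B. A $$ (i,k) * B $$ (k,j))"
  by (simp add: scalar_prod_def atLeast0LessThan)

lemma mat_adjoint_mult:
  assumes "A \<in> carrier_mat n m" "B \<in> carrier_mat m p"
  shows "cH (A * B) = cH B * cH A"
  by (rule eq_matI)
    (use assms in \<open>auto simp: index_mult_mat_sum sum_distrib_left mult.commute simp del: index_mult_mat(1)\<close>)

lemma mat_adjoint_eq_index:
  "cH X = Y \<Longrightarrow> X \<in> carrier_mat m n \<Longrightarrow> i < n \<Longrightarrow> j < m \<Longrightarrow> cnj (X $$ (j,i)) = Y $$ (i,j)"
  by auto

lemma mat_adjoint_gram:
  "B1 \<in> carrier_mat n M \<Longrightarrow> B2 \<in> carrier_mat n M \<Longrightarrow> cH (cH B1 * B2) = cH B2 * B1"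
  using mat_adjoint_mult[of "cH B1" M n B2 M] by simp

lemma transpose_symmetric_index:
  "transpose_mat A = A \<Longrightarrow> A \<in> carrier_mat n n \<Longrightarrow> i < n \<Longrightarrow> j < n \<Longrightarrow> A $$ (i,j) = A $$ (j,i)"
  by (metis carrier_matD index_transpose_mat(1))

lemma mtrace_mult_sum:
  "A \<in> carrier_mat n m \<Longrightarrow> B \<in> carrier_mat m n \<Longrightarrow>
   mtrace (A * B) = (\<Sum>i<n. \<Sum>k<m. A $$ (i,k) * B $$ (k,i))"
  by (simp add: mtrace_def index_mult_mat_sum del: index_mult_mat(1))

lemma mtrace_mult_comm:
  assumes "A \<in> carrier_mat n m" "B \<in> carrier_mat m n"
  shows "mtrace (A * B) = mtrace (B * A)"
  using assms by (simp add: mtrace_mult_sum[of _ n m] mtrace_mult_sum[of _ m n] mult.commute sum.swap[of _ "{..<n}"])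

lemma mtrace_add:
  "A \<in> carrier_mat n n \<Longrightarrow> B \<in> carrier_mat n n \<Longrightarrow> mtrace (A + B) = mtrace A + mtrace B"
  by (simp add: mtrace_def sum.distrib)

lemma mtrace_diff:
  "A \<in> carrier_mat n n \<Longrightarrow> B \<in> carrier_mat n n \<Longrightarrow> mtrace (A - B) = mtrace A - mtrace B"
  by (simp add: mtrace_def sum_subtractf)

lemma mtrace_smult: "A \<in> carrier_mat n n \<Longrightarrow> mtrace (a \<cdot>\<^sub>m A) = a * mtrace A"
  by (simp add: mtrace_def sum_distrib_left)

lemma mtrace_add_mult:
  "A \<in> carrier_mat n n \<Longrightarrow> B \<in> carrier_mat n n \<Longrightarrow> R \<in> carrier_mat n n \<Longrightarrow>
   mtrace ((A + B) * R) = mtrace (A * R) + mtrace (B * R)"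
  by (simp add: add_mult_distrib_mat[of _ n n] mtrace_add[of _ n])

lemma mtrace_smult_mult:
  "A \<in> carrier_mat n n \<Longrightarrow> R \<in> carrier_mat n n \<Longrightarrow> mtrace ((a \<cdot>\<^sub>m A) * R) = a * mtrace (A * R)"
  by (simp add: mult_smult_assoc_mat[of _ n n] mtrace_smult[of _ n])

lemma mtrace_mult_rotate:
  assumes P: "P \<in> carrier_mat m m" and X: "X \<in> carrier_mat m n" and Y: "Y \<in> carrier_mat n m"
  shows "mtrace (P * (X * Y)) = mtrace (Y * P * X)"
  using mtrace_mult_comm[OF mult_carrier_mat[OF P X] Y] assoc_mult_mat[OF P X Y] assoc_mult_mat[OF Y P X]
  by simp

lemma mtrace_rotate5:
  assumes P: "P \<in> carrier_mat m m" and X1: "X1 \<in> carrier_mat m a" and X2: "X2 \<in> carrier_mat a n"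
    and R: "R \<in> carrier_mat n n" and Y1: "Y1 \<in> carrier_mat n b" and Y2: "Y2 \<in> carrier_mat b m"
  shows "mtrace (P * (X1 * X2 * R * Y1 * Y2)) = mtrace (Y1 * Y2 * P * X1 * X2 * R)"
proof -
  have X: "X1 * X2 * R \<in> carrier_mat m n" and Y: "Y1 * Y2 \<in> carrier_mat n m"
    and PX: "P * X1 \<in> carrier_mat m a" "P * X1 * X2 \<in> carrier_mat m n" using assms by auto
  have "P * (X1 * X2 * R * Y1 * Y2) = (P * X1 * X2 * R) * (Y1 * Y2)"
    using assoc_mult_mat[OF X Y1 Y2] assoc_mult_mat[OF P X Y] assoc_mult_mat[OF P mult_carrier_mat[OF X1 X2] R]
      assoc_mult_mat[OF P X1 X2] by simp
  moreover have "Y1 * Y2 * P * X1 * X2 * R = (Y1 * Y2) * (P * X1 * X2 * R)"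
    using assoc_mult_mat[OF Y PX(2) R] assoc_mult_mat[OF Y PX(1) X2] assoc_mult_mat[OF Y P X1] by simp
  ultimately show ?thesis using mtrace_mult_comm[OF mult_carrier_mat[OF PX(2) R] Y] by simp
qed

lemma mtrace_rotate4:
  assumes P: "P \<in> carrier_mat m m" and X: "X \<in> carrier_mat m n" and R: "R \<in> carrier_mat n n"
    and Y1: "Y1 \<in> carrier_mat n b" and Y2: "Y2 \<in> carrier_mat b m"
  shows "mtrace (P * (X * R * Y1 * Y2)) = mtrace (Y1 * Y2 * P * X * R)"
proof -
  have XR: "X * R \<in> carrier_mat m n" and Y: "Y1 * Y2 \<in> carrier_mat n m" and PX: "P * X \<in> carrier_mat m n"
    using assms by auto
  have "P * (X * R * Y1 * Y2) = (P * X * R) * (Y1 * Y2)"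
    using assoc_mult_mat[OF XR Y1 Y2] assoc_mult_mat[OF P XR Y] assoc_mult_mat[OF P X R] by simp
  moreover have "Y1 * Y2 * P * X * R = (Y1 * Y2) * (P * X * R)"
    using assoc_mult_mat[OF Y PX R] assoc_mult_mat[OF Y P X] by simp
  ultimately show ?thesis using mtrace_mult_comm[OF mult_carrier_mat[OF PX R] Y] by simp
qed

lemma mtrace_rotate3:
  assumes P: "P \<in> carrier_mat m m" and X: "X \<in> carrier_mat m n" and R: "R \<in> carrier_mat n n"
    and Y: "Y \<in> carrier_mat n m"
  shows "mtrace (P * (X * R * Y)) = mtrace (Y * P * X * R)"
proof -
  have XR: "X * R \<in> carrier_mat m n" and PX: "P * X \<in> carrier_mat m n" using assms by auto
  have "P * (X * R * Y) = (P * X * R) * Y"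
    using assoc_mult_mat[OF P XR Y] assoc_mult_mat[OF P X R] by simp
  moreover have "Y * P * X * R = Y * (P * X * R)"
    using assoc_mult_mat[OF Y PX R] assoc_mult_mat[OF Y P X] by simp
  ultimately show ?thesis using mtrace_mult_comm[OF mult_carrier_mat[OF PX R] Y] by simp
qed

lemma unitm_dims [simp]: "dim_row (unitm n m i j) = n" "dim_col (unitm n m i j) = m"
  by (auto simp: unitm_def)

lemma unitm_carrier [simp]: "unitm n m i j \<in> carrier_mat n m"
  by (simp add: unitm_def)

lemma index_unitm [simp]:
  "a < n \<Longrightarrow> b < m \<Longrightarrow> unitm n m i j $$ (a,b) = (if a = i \<and> b = j then 1 else 0)"
  by (auto simp: unitm_def)

lemma mat_adjoint_unitm: "cH (unitm n m i j) = unitm m n j i"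
  by (rule eq_matI) auto

lemma sum_mult_delta_right:
  "(\<Sum>k<(n::nat). f k * (if k = i then 1 else 0)) = (if i < n then f i else (0::'a::semiring_1))"
proof -
  have "(\<Sum>k<n. f k * (if k = i then 1 else 0)) = (\<Sum>k<n. if k = i then f k else 0)"
    by (rule sum.cong) auto
  then show ?thesis by simp
qed

lemma index_mult_unitm:
  assumes "Y \<in> carrier_mat p n" "b < p" "a < m" "i < n" "j < m"
  shows "(Y * unitm n m i j) $$ (b,a) = (if a = j then Y $$ (b,i) else 0)"
  using assms by (auto simp: index_mult_mat_sum sum_mult_delta_right simp del: index_mult_mat(1))

lemma mtrace_mult_unitm:
  assumes "X \<in> carrier_mat m n" "i < n" "j < m"
  shows "mtrace (X * unitm n m i j) = X $$ (j,i)"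
  using assms by (simp add: mtrace_def index_mult_unitm[OF assms(1)] del: index_mult_mat(1))

lemma index_lincomb2_mult:
  assumes "X1 \<in> carrier_mat n n" "X2 \<in> carrier_mat n n" "(W :: complex mat) \<in> carrier_mat n m" "a < n" "b < m"
  shows "((\<alpha> \<cdot>\<^sub>m X1 - \<beta> \<cdot>\<^sub>m X2) * W) $$ (a,b) = \<alpha> * (X1 * W) $$ (a,b) - \<beta> * (X2 * W) $$ (a,b)"
  using assms by (simp add: minus_mult_distrib_mat[of _ n n] mult_smult_assoc_mat[of _ n n])

lemma index_lincomb3_mult:
  assumes "X1 \<in> carrier_mat n n" "X2 \<in> carrier_mat n n" "(W :: complex mat) \<in> carrier_mat n m" "a < n" "b < m"
  shows "((\<gamma> \<cdot>\<^sub>m 1\<^sub>m n + \<alpha> \<cdot>\<^sub>m X1 - \<beta> \<cdot>\<^sub>m X2) * W) $$ (a,b)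
    = \<gamma> * W $$ (a,b) + \<alpha> * (X1 * W) $$ (a,b) - \<beta> * (X2 * W) $$ (a,b)"
  using assms
  by (simp add: add_mult_distrib_mat[of _ n n] minus_mult_distrib_mat[of _ n n] mult_smult_assoc_mat[of _ n n])

lemma eigen_of_lincomb_mult_zero:
  assumes B: "B \<in> carrier_mat n n" and P: "P \<in> carrier_mat n n" and Y: "Y \<in> carrier_mat n m"
    and zero: "(\<gamma> \<cdot>\<^sub>m 1\<^sub>m n + \<alpha> \<cdot>\<^sub>m B - \<beta> \<cdot>\<^sub>m P) * Y = 0\<^sub>m n m"
  shows "(\<beta> \<cdot>\<^sub>m P - \<alpha> \<cdot>\<^sub>m B) * Y = (\<gamma> :: complex) \<cdot>\<^sub>m Y"
proof (rule eq_matI)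
  fix a b assume "a < dim_row (\<gamma> \<cdot>\<^sub>m Y)" "b < dim_col (\<gamma> \<cdot>\<^sub>m Y)"
  then have ab: "a < n" "b < m" using Y by auto
  have "\<gamma> * Y $$ (a,b) + \<alpha> * (B * Y) $$ (a,b) - \<beta> * (P * Y) $$ (a,b) = 0"
    using arg_cong[OF zero, of "\<lambda>Z. Z $$ (a,b)"] index_lincomb3_mult[OF B P Y ab, of \<gamma> \<alpha> \<beta>] ab
    by (simp del: index_mult_mat(1))
  then have "\<beta> * (P * Y) $$ (a,b) - \<alpha> * (B * Y) $$ (a,b) = \<gamma> * Y $$ (a,b)"
    by (simp add: eq_diff_eq diff_eq_eq)
  then show "((\<beta> \<cdot>\<^sub>m P - \<alpha> \<cdot>\<^sub>m B) * Y) $$ (a,b) = (\<gamma> \<cdot>\<^sub>m Y) $$ (a,b)"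
    using index_lincomb2_mult[OF P B Y ab, of \<beta> \<alpha>] ab Y by (simp del: index_mult_mat(1))
qed (use Y P B in auto)

lemma hadamard_dims [simp]: "dim_row (A \<odot> B) = dim_row A" "dim_col (A \<odot> B) = dim_col A"
  by (auto simp: hadamard_def)

lemma index_hadamard [simp]:
  "i < dim_row A \<Longrightarrow> j < dim_col A \<Longrightarrow> (A \<odot> B) $$ (i,j) = A $$ (i,j) * B $$ (i,j)"
  by (auto simp: hadamard_def)

lemma hadamard_carrier [simp]: "A \<in> carrier_mat p q \<Longrightarrow> A \<odot> B \<in> carrier_mat p q"
  by (metis carrier_matD carrier_matI hadamard_dims)

lemma Re_mat_dims [simp]: "dim_row (Re_mat A) = dim_row A" "dim_col (Re_mat A) = dim_col A"
  and Im_mat_dims [simp]: "dim_row (Im_mat A) = dim_row A" "dim_col (Im_mat A) = dim_col A"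
  and cmat_dims [simp]: "dim_row (cmat B) = dim_row B" "dim_col (cmat B) = dim_col B"
  by (auto simp: Re_mat_def Im_mat_def cmat_def)

lemma index_Re_mat [simp]:
  "i < dim_row A \<Longrightarrow> j < dim_col A \<Longrightarrow> Re_mat A $$ (i,j) = Re (A $$ (i,j))"
  and index_Im_mat [simp]: "i < dim_row A \<Longrightarrow> j < dim_col A \<Longrightarrow> Im_mat A $$ (i,j) = Im (A $$ (i,j))"
  and index_cmat [simp]: "i < dim_row B \<Longrightarrow> j < dim_col B \<Longrightarrow> cmat B $$ (i,j) = complex_of_real (B $$ (i,j))"
  by (auto simp: Re_mat_def Im_mat_def cmat_def)

lemma Re_mat_carrier [simp]: "A \<in> carrier_mat p q \<Longrightarrow> Re_mat A \<in> carrier_mat p q"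
  and Im_mat_carrier [simp]: "A \<in> carrier_mat p q \<Longrightarrow> Im_mat A \<in> carrier_mat p q"
  and cmat_carrier [simp]: "B \<in> carrier_mat p q \<Longrightarrow> cmat B \<in> carrier_mat p q"
  by (metis carrier_matD carrier_matI Re_mat_dims Im_mat_dims cmat_dims)+

lemma block4_dims [simp]: "dim_row (block4 M bl) = 4*M" "dim_col (block4 M bl) = 4*M"
  by (auto simp: block4_def)

lemma index_block4:
  "i < 4*M \<Longrightarrow> j < 4*M \<Longrightarrow> block4 M bl $$ (i,j) = (bl ! (i div M) ! (j div M)) $$ (i mod M, j mod M)"
  by (auto simp: block4_def)

lemma block4_carrier [simp]: "block4 M bl \<in> carrier_mat (4*M) (4*M)"
  by (simp add: block4_def)

lemma blk_dims [simp]: "dim_row (blk M Phi p q) = M" "dim_col (blk M Phi p q) = M"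
  by (simp_all add: blk_def)

lemma blk_carrier [simp]: "blk M Phi p q \<in> carrier_mat M M"
  by (simp add: blk_def)

lemma index_blk [simp]:
  "r < M \<Longrightarrow> c < M \<Longrightarrow> blk M Phi p q $$ (r,c) = Phi $$ ((p-1)*M + r, (q-1)*M + c)"
  by (simp add: blk_def)

lemma block_index_bounds:
  fixes i M :: nat
  assumes "i < 4*M"
  shows "i div M < 4" "i mod M < M"
  using assms by (auto simp: less_mult_imp_div_less)

lemma block_offset_less: "q < 4 \<Longrightarrow> r < M \<Longrightarrow> r + q * M < 4 * (M::nat)"
proof -
  assume "q < 4" "r < M"
  then have "r + q * M < (q + 1) * M" by simp
  also have "\<dots> \<le> 4 * M" using \<open>q < 4\<close> by (intro mult_right_mono) auto
  finally show ?thesis .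
qed

lemma index_block4_offset:
  "q < 4 \<Longrightarrow> p < 4 \<Longrightarrow> r < M \<Longrightarrow> c < M \<Longrightarrow> block4 M bl $$ (r + q*M, c + p*M) = (bl ! q ! p) $$ (r,c)"
  by (simp add: index_block4 block_offset_less)

lemma sum_4: "(\<Sum>q<(4::nat). f q) = f 0 + f 1 + f 2 + f 3"
  by (simp add: numeral_eq_Suc add.assoc)

lemma less_4_cases: "(p::nat) < 4 \<longleftrightarrow> p = 0 \<or> p = 1 \<or> p = 2 \<or> p = 3"
  by arith

lemma invertible_mat_det_nonzero:
  assumes "invertible_mat (A::'a::field mat)" "A \<in> carrier_mat n n"
  shows "det A \<noteq> 0"
proof -
  from assms obtain B where AB: "A * B = 1\<^sub>m n" and BA: "B * A = 1\<^sub>m (dim_row B)"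
    unfolding invertible_mat_def inverts_mat_def by auto
  have "B \<in> carrier_mat n n"
    using arg_cong[OF AB, of dim_col] arg_cong[OF BA, of dim_col] assms(2) by auto
  then have "det A * det B = 1"
    using det_mult[OF assms(2)] AB by (metis det_one)
  then show ?thesis by auto
qed

lemma minv:
  assumes A: "A \<in> carrier_mat n n" and d: "det A \<noteq> (0::'a::field)"
  shows minv_carrier: "minv A \<in> carrier_mat n n"
    and mult_minv_right: "A * minv A = 1\<^sub>m n"
    and mult_minv_left: "minv A * A = 1\<^sub>m n"
proof -
  have U: "A \<in> Units (ring_mat TYPE('a) n undefined)" by (rule det_non_zero_imp_unit[OF A d])
  obtain B where B: "mat_inverse A = Some B"
    using mat_inverse(1)[OF A, where b=undefined] U by (cases "mat_inverse A") auto
  then have "A * B = 1\<^sub>m n \<and> B * A = 1\<^sub>m n \<and> B \<in> carrier_mat n n" by (rule mat_inverse(2)[OF A])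
  moreover have "minv A = B" using B by (simp add: minv_def)
  ultimately show "minv A \<in> carrier_mat n n" "A * minv A = 1\<^sub>m n" "minv A * A = 1\<^sub>m n" by auto
qed

lemma minv_unique:
  assumes A: "A \<in> carrier_mat n n" and d: "det A \<noteq> (0::'a::field)"
    and X: "X \<in> carrier_mat n n" and AX: "A * X = 1\<^sub>m n"
  shows "minv A = X"
proof -
  have "minv A = minv A * (A * X)" using AX minv_carrier[OF A d] by simp
  also have "\<dots> = X" using minv[OF A d] A X by (simp add: assoc_mult_mat[symmetric, of _ n n])
  finally show ?thesis .
qed

lemma minv_eq_adj:
  assumes A: "A \<in> carrier_mat n n" and d: "det A \<noteq> (0::'a::field)"
  shows "minv A = (1 / det A) \<cdot>\<^sub>m adj_mat A"
proof (rule minv_unique[OF A d])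
  show "(1 / det A) \<cdot>\<^sub>m adj_mat A \<in> carrier_mat n n" using adj_mat(1)[OF A] by simp
  have "A * ((1 / det A) \<cdot>\<^sub>m adj_mat A) = (1 / det A) \<cdot>\<^sub>m (A * adj_mat A)"
    by (rule mult_smult_distrib[OF A adj_mat(1)[OF A]])
  also have "\<dots> = 1\<^sub>m n" unfolding adj_mat(2)[OF A] using d by (intro eq_matI) auto
  finally show "A * ((1 / det A) \<cdot>\<^sub>m adj_mat A) = 1\<^sub>m n" .
qed

lemma transpose_minv_symmetric:
  assumes F: "F \<in> carrier_mat n n" and d: "det F \<noteq> (0::'a::field)" and s: "transpose_mat F = F"
  shows "transpose_mat (minv F) = minv F"
proof -
  have "F * transpose_mat (minv F) = 1\<^sub>m n"
    using transpose_mult[OF minv_carrier[OF F d] F] mult_minv_left[OF F d] s by simp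
  then show ?thesis
    using minv_unique[OF F d] minv_carrier[OF F d] by (metis transpose_carrier_mat)
qed

lemma minv_diff:
  assumes A: "A \<in> carrier_mat n n" "det A \<noteq> (0::'a::field)"
    and B: "B \<in> carrier_mat n n" "det B \<noteq> 0"
  shows "minv A - minv B = minv A * (B - A) * minv B"
proof -
  note a = minv[OF A] and b = minv[OF B]
  have "minv A * (B - A) * minv B = minv A * (B * minv B) - (minv A * A) * minv B"
    using a b A B by (simp add: mult_minus_distrib_mat[of _ n n] minus_mult_distrib_mat[of _ n n]
        assoc_mult_mat[of _ n n])
  then show ?thesis using a b by simp
qed

lemma eq_minv_mult:
  assumes X: "X \<in> carrier_mat n n" "invertible_mat (X :: 'a::field mat)" and Y: "Y \<in> carrier_mat n m"
    and XY: "X * Y = Z"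
  shows "Y = minv X * Z"
proof -
  have d: "det X \<noteq> 0" by (rule invertible_mat_det_nonzero[OF X(2,1)])
  have "minv X * Z = (minv X * X) * Y" using assoc_mult_mat[OF minv_carrier[OF X(1) d] X(1) Y] XY by simp
  then show ?thesis using mult_minv_left[OF X(1) d] Y by simp
qed

section \<open>Derivative of the trace of the inverse\<close>

lemma continuous_det_mat:
  fixes F :: "real \<Rightarrow> real mat"
  assumes c: "\<And>t. F t \<in> carrier_mat n n"
    and e: "\<And>i j. i < n \<Longrightarrow> j < n \<Longrightarrow> continuous (at x) (\<lambda>t. F t $$ (i,j))"
  shows "continuous (at x) (\<lambda>t. det (F t))"
proof -
  have "(\<lambda>t. det (F t)) =
      (\<lambda>t. \<Sum>p \<in> {p. p permutes {0..<n}}. signof p * (\<Prod>i = 0..<n. F t $$ (i, p i)))"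
    using det_def'[OF c] by auto
  moreover have "continuous (at x) (\<lambda>t. F t $$ (i, p i))" if "p permutes {0..<n}" "i \<in> {0..<n}" for p i
    using e permutes_in_image[OF that(1)] that(2) by auto
  ultimately show ?thesis
    by (auto intro!: continuous_sum continuous_mult continuous_const continuous_prod)
qed

lemma continuous_adj_mat:
  fixes F :: "real \<Rightarrow> real mat"
  assumes c: "\<And>t. F t \<in> carrier_mat n n"
    and e: "\<And>i j. i < n \<Longrightarrow> j < n \<Longrightarrow> continuous (at x) (\<lambda>t. F t $$ (i,j))"
    and ij: "i < n" "j < n"
  shows "continuous (at x) (\<lambda>t. adj_mat (F t) $$ (i,j))"
proof -
  have dims: "dim_row (F t) = n" "dim_col (F t) = n" for t using c[of t] by auto
  have "(\<lambda>t. adj_mat (F t) $$ (i,j)) = (\<lambda>t. (-1)^(j+i) * det (mat_delete (F t) j i))"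
    using ij by (auto simp: adj_mat_def cofactor_def dims)
  moreover have "continuous (at x) (\<lambda>t. det (mat_delete (F t) j i))"
  proof (rule continuous_det_mat[of _ "n - 1"])
    show "mat_delete (F t) j i \<in> carrier_mat (n - 1) (n - 1)" for t using c mat_delete_carrier by blast
    fix a b assume ab: "a < n - 1" "b < n - 1"
    have "(\<lambda>t. mat_delete (F t) j i $$ (a, b)) =
        (\<lambda>t. F t $$ (if a < j then a else Suc a, if b < i then b else Suc b))"
      using ab by (auto simp: mat_delete_def dims)
    then show "continuous (at x) (\<lambda>t. mat_delete (F t) j i $$ (a, b))"
      using ab by (auto intro!: e)
  qed
  ultimately show ?thesis by (auto intro!: continuous_intros)
qed

lemma eventually_det_nonzero:
  fixes F :: "real \<Rightarrow> real mat"
  assumes "\<And>t. F t \<in> carrier_mat n n"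
    and "\<And>i j. i < n \<Longrightarrow> j < n \<Longrightarrow> continuous (at x) (\<lambda>t. F t $$ (i,j))"
    and "det (F x) \<noteq> 0"
  shows "eventually (\<lambda>t. det (F t) \<noteq> 0) (at x)"
  using continuous_det_mat[OF assms(1,2)] assms(3)
  by (intro tendsto_imp_eventually_ne) (auto simp: continuous_at)

lemma tendsto_minv_entry:
  fixes F :: "real \<Rightarrow> real mat"
  assumes c: "\<And>t. F t \<in> carrier_mat n n"
    and e: "\<And>k l. k < n \<Longrightarrow> l < n \<Longrightarrow> continuous (at x) (\<lambda>t. F t $$ (k,l))"
    and d: "det (F x) \<noteq> 0" and ij: "i < n" "j < n"
  shows "((\<lambda>t. minv (F t) $$ (i,j)) \<longlongrightarrow> minv (F x) $$ (i,j)) (at x)"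
proof -
  have minv_entry: "minv (F t) $$ (i,j) = adj_mat (F t) $$ (i,j) / det (F t)" if "det (F t) \<noteq> 0" for t
  proof -
    have "dim_row (adj_mat (F t)) = n" "dim_col (adj_mat (F t)) = n" using adj_mat(1)[OF c] by auto
    then show ?thesis using minv_eq_adj[OF c that] ij by simp
  qed
  have "continuous (at x) (\<lambda>t. adj_mat (F t) $$ (i,j) / det (F t))"
    using continuous_adj_mat[OF c e ij] continuous_det_mat[OF c e] d by (intro continuous_intros)
  then have "((\<lambda>t. adj_mat (F t) $$ (i,j) / det (F t)) \<longlongrightarrow> minv (F x) $$ (i,j)) (at x)"
    by (simp add: continuous_at minv_entry[OF d])
  moreover have "eventually (\<lambda>t. adj_mat (F t) $$ (i,j) / det (F t) = minv (F t) $$ (i,j)) (at x)"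
  proof -
    have "eventually (\<lambda>t. det (F t) \<noteq> 0) (at x)" using c e d by (rule eventually_det_nonzero)
    then show ?thesis by (rule eventually_mono) (simp add: minv_entry)
  qed
  ultimately show ?thesis by (rule Lim_transform_eventually)
qed

lemma tendsto_mtrace_mult3:
  fixes X Y :: "real \<Rightarrow> 'a::real_normed_field mat"
  assumes X: "eventually (\<lambda>t. X t \<in> carrier_mat n n) F" and Y: "\<And>t. Y t \<in> carrier_mat n n"
    and c: "X0 \<in> carrier_mat n n" "Y0 \<in> carrier_mat n n" "Z \<in> carrier_mat n n"
    and lim: "\<And>i j. i < n \<Longrightarrow> j < n \<Longrightarrow> ((\<lambda>t. X t $$ (i,j)) \<longlongrightarrow> X0 $$ (i,j)) F"
      "\<And>i j. i < n \<Longrightarrow> j < n \<Longrightarrow> ((\<lambda>t. Y t $$ (i,j)) \<longlongrightarrow> Y0 $$ (i,j)) F"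
  shows "((\<lambda>t. mtrace (X t * Y t * Z)) \<longlongrightarrow> mtrace (X0 * Y0 * Z)) F"
proof -
  have tr3: "mtrace (A * B * Z) = (\<Sum>i<n. \<Sum>k<n. (\<Sum>l<n. A $$ (i,l) * B $$ (l,k)) * Z $$ (k,i))"
    if "A \<in> carrier_mat n n" "B \<in> carrier_mat n n" for A B
    using that c(3) by (simp add: mtrace_def index_mult_mat_sum del: index_mult_mat(1) assoc_mult_mat)
  have "((\<lambda>t. \<Sum>i<n. \<Sum>k<n. (\<Sum>l<n. X t $$ (i,l) * Y t $$ (l,k)) * Z $$ (k,i))
      \<longlongrightarrow> mtrace (X0 * Y0 * Z)) F"
    unfolding tr3[OF c(1,2)] by (auto intro!: tendsto_intros lim)
  moreover have "eventually (\<lambda>t. (\<Sum>i<n. \<Sum>k<n. (\<Sum>l<n. X t $$ (i,l) * Y t $$ (l,k)) * Z $$ (k,i))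
      = mtrace (X t * Y t * Z)) F"
    using X by eventually_elim (simp add: tr3 Y)
  ultimately show ?thesis by (rule Lim_transform_eventually)
qed

lemma mtrace_minv_quadratic_quotient:
  fixes F0 F1 F2 :: "real mat"
  assumes c: "F0 \<in> carrier_mat n n" "F1 \<in> carrier_mat n n" "F2 \<in> carrier_mat n n"
    and d: "det F0 \<noteq> 0" and dt: "det (F0 + t \<cdot>\<^sub>m F1 + t^2 \<cdot>\<^sub>m F2) \<noteq> 0" and t: "t \<noteq> 0"
  defines "G \<equiv> minv (F0 + t \<cdot>\<^sub>m F1 + t^2 \<cdot>\<^sub>m F2)"
  shows "(mtrace G - mtrace (minv F0)) / t = - mtrace (G * (F1 + t \<cdot>\<^sub>m F2) * minv F0)"
proof -
  have F: "F0 + t \<cdot>\<^sub>m F1 + t^2 \<cdot>\<^sub>m F2 \<in> carrier_mat n n" and H: "F1 + t \<cdot>\<^sub>m F2 \<in> carrier_mat n n"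
    using c by auto
  have G: "G \<in> carrier_mat n n" unfolding G_def by (rule minv_carrier[OF F dt])
  have diff: "F0 - (F0 + t \<cdot>\<^sub>m F1 + t^2 \<cdot>\<^sub>m F2) = (- t) \<cdot>\<^sub>m (F1 + t \<cdot>\<^sub>m F2)"
    by (rule eq_matI) (use c in \<open>auto simp: power2_eq_square algebra_simps\<close>)
  have "G - minv F0 = G * ((- t) \<cdot>\<^sub>m (F1 + t \<cdot>\<^sub>m F2)) * minv F0"
    using minv_diff[OF F dt c(1) d] diff by (simp add: G_def)
  also have "\<dots> = (- t) \<cdot>\<^sub>m (G * (F1 + t \<cdot>\<^sub>m F2) * minv F0)"
    using mult_smult_distrib[OF G H] mult_smult_assoc_mat[OF mult_carrier_mat[OF G H] minv_carrier[OF c(1) d]]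
    by simp
  finally have "mtrace G - mtrace (minv F0) = - t * mtrace (G * (F1 + t \<cdot>\<^sub>m F2) * minv F0)"
    using mtrace_diff[OF G minv_carrier[OF c(1) d]]
      mtrace_smult[OF mult_carrier_mat[OF mult_carrier_mat[OF G H] minv_carrier[OF c(1) d]]] by simp
  then show ?thesis using t by simp
qed

lemma has_real_derivative_mtrace_minv:
  fixes F0 F1 F2 :: "real mat"
  assumes c: "F0 \<in> carrier_mat n n" "F1 \<in> carrier_mat n n" "F2 \<in> carrier_mat n n"
    and d: "det F0 \<noteq> 0"
  shows "((\<lambda>t. mtrace (minv (F0 + t \<cdot>\<^sub>m F1 + t^2 \<cdot>\<^sub>m F2))) has_real_derivative
          - mtrace (minv F0 * F1 * minv F0)) (at 0)"
proof -
  define F where "F t = F0 + t \<cdot>\<^sub>m F1 + t^2 \<cdot>\<^sub>m F2" for t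
  define H where "H t = F1 + t \<cdot>\<^sub>m F2" for t
  have Fc: "F t \<in> carrier_mat n n" and Hc: "H t \<in> carrier_mat n n" for t
    using c by (simp_all add: F_def H_def)
  have Fd [simp]: "dim_row (F t) = n" "dim_col (F t) = n" for t using Fc[of t] by auto
  have F_entry: "F t $$ (i,j) = F0 $$ (i,j) + t * F1 $$ (i,j) + t^2 * F2 $$ (i,j)"
    if "i < n" "j < n" for t i j
    using c that by (simp add: F_def)
  have F0: "F 0 = F0" by (rule eq_matI) (use c Fc in \<open>auto simp: F_entry\<close>)
  have F_cont: "continuous (at 0) (\<lambda>t. F t $$ (i,j))" if "i < n" "j < n" for i j
    using that by (simp add: F_entry)
  have ev: "eventually (\<lambda>t. det (F t) \<noteq> 0) (at 0)"
    using eventually_det_nonzero[OF Fc F_cont] d F0 by simp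
  have quotient: "(mtrace (minv (F t)) - mtrace (minv F0)) / t = - mtrace (minv (F t) * H t * minv F0)"
    if "det (F t) \<noteq> 0" "t \<noteq> 0" for t
    using mtrace_minv_quadratic_quotient[OF c d that(1)[unfolded F_def] that(2)] by (simp add: F_def H_def)
  have lim: "((\<lambda>t. mtrace (minv (F t) * H t * minv F0)) \<longlongrightarrow> mtrace (minv F0 * F1 * minv F0)) (at 0)"
  proof (rule tendsto_mtrace_mult3)
    show "eventually (\<lambda>t. minv (F t) \<in> carrier_mat n n) (at 0)"
      using ev by eventually_elim (rule minv_carrier[OF Fc])
    show "((\<lambda>t. minv (F t) $$ (i,j)) \<longlongrightarrow> minv F0 $$ (i,j)) (at 0)" if "i < n" "j < n" for i j
      using tendsto_minv_entry[OF Fc F_cont _ that] d F0 by simp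
    show "((\<lambda>t. H t $$ (i,j)) \<longlongrightarrow> F1 $$ (i,j)) (at 0)" if "i < n" "j < n" for i j
      using that c by (auto simp: H_def intro!: tendsto_eq_intros)
  qed (use Hc c minv_carrier[OF c(1) d] in auto)
  have "((\<lambda>t. (mtrace (minv (F t)) - mtrace (minv (F 0))) / (t - 0))
      \<longlongrightarrow> - mtrace (minv F0 * F1 * minv F0)) (at 0)"
  proof (rule Lim_transform_eventually[OF tendsto_minus[OF lim]])
    have "eventually (\<lambda>t. t \<noteq> 0) (at (0::real))" by (simp add: eventually_at_filter)
    with ev show "eventually (\<lambda>t. - mtrace (minv (F t) * H t * minv F0)
        = (mtrace (minv (F t)) - mtrace (minv (F 0))) / (t - 0)) (at 0)"
      by eventually_elim (simp add: quotient F0)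
  qed
  then show ?thesis by (simp add: has_field_derivative_iff F_def)
qed

section \<open>The Fisher information as a function of the transmit covariance\<close>

definition sensing_dims :: "nat \<Rightarrow> nat \<Rightarrow> nat \<Rightarrow> sensing \<Rightarrow> bool" where
  "sensing_dims Nt Nr M S \<longleftrightarrow>
     sA S \<in> carrier_mat Nt M \<and> sAt S \<in> carrier_mat Nt M \<and> sAp S \<in> carrier_mat Nt M \<and>
     sB S \<in> carrier_mat Nr M \<and> sBt S \<in> carrier_mat Nr M \<and> sBp S \<in> carrier_mat Nr M \<and>
     sU S \<in> carrier_mat M M"

lemma sensing_dimsD:
  assumes "sensing_dims Nt Nr M S"
  shows "sA S \<in> carrier_mat Nt M" "sAt S \<in> carrier_mat Nt M" "sAp S \<in> carrier_mat Nt M"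
    "sB S \<in> carrier_mat Nr M" "sBt S \<in> carrier_mat Nr M" "sBp S \<in> carrier_mat Nr M"
    "sU S \<in> carrier_mat M M"
  using assms by (auto simp: sensing_dims_def)

lemma sensing_dims_sensing_of: "sensing_dims Nt Nr M (sensing_of Nt Nr M a b th ph al)"
  by (simp add: sensing_dims_def sensing_of_def steer_def steer_dth_def steer_dph_def diagc_def)

definition mat_clinear :: "nat \<Rightarrow> (complex mat \<Rightarrow> complex mat) \<Rightarrow> nat \<Rightarrow> nat \<Rightarrow> bool" where
  "mat_clinear n f p q \<longleftrightarrow> (\<forall>A \<in> carrier_mat n n. f A \<in> carrier_mat p q)
     \<and> (\<forall>A \<in> carrier_mat n n. \<forall>B \<in> carrier_mat n n. f (A + B) = f A + f B)
     \<and> (\<forall>a. \<forall>A \<in> carrier_mat n n. f (a \<cdot>\<^sub>m A) = a \<cdot>\<^sub>m f A)"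

lemma mat_clinearD:
  assumes "mat_clinear n f p q" "A \<in> carrier_mat n n" "B \<in> carrier_mat n n"
  shows "f A \<in> carrier_mat p q" "dim_row (f A) = p" "dim_col (f A) = q"
    "f (A + B) = f A + f B" "f (a \<cdot>\<^sub>m A) = a \<cdot>\<^sub>m f A"
  using assms unfolding mat_clinear_def by auto

lemma mat_clinear_add:
  assumes "mat_clinear n f p q" "mat_clinear n g p q"
  shows "mat_clinear n (\<lambda>R. f R + g R) p q"
  unfolding mat_clinear_def
  using mat_clinearD[OF assms(1)] mat_clinearD[OF assms(2)]
  by (auto intro!: eq_matI simp: distrib_left)

lemma mat_clinear_transpose:
  assumes "mat_clinear n f p q"
  shows "mat_clinear n (\<lambda>R. transpose_mat (f R)) q p"
  unfolding mat_clinear_def using mat_clinearD[OF assms] by (auto intro!: eq_matI)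

lemma mat_clinear_hadamard:
  assumes "mat_clinear n f p q" "Y \<in> carrier_mat p q"
  shows "mat_clinear n (\<lambda>R. f R \<odot> Y) p q"
  unfolding mat_clinear_def using mat_clinearD[OF assms(1)] by (auto intro!: eq_matI simp: distrib_right)

lemma mat_clinear_mult_left: "X \<in> carrier_mat p n \<Longrightarrow> mat_clinear n (\<lambda>R. X * R) p n"
  unfolding mat_clinear_def by (auto simp: mult_add_distrib_mat[of _ p n] mult_smult_distrib[of _ p n])

lemma mat_clinear_mult_right:
  assumes "Y \<in> carrier_mat q r" "mat_clinear n f p q"
  shows "mat_clinear n (\<lambda>R. f R * Y) p r"
  using assms unfolding mat_clinear_def by (auto simp: add_mult_distrib_mat[of _ p q] mult_smult_assoc_mat[of _ p q])

text \<open>The Fisher blocks involve real and imaginary parts, so the Fisher map is only \<open>\<real>\<close>-linear.\<close>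

definition mat_rlinear :: "nat \<Rightarrow> (complex mat \<Rightarrow> real mat) \<Rightarrow> nat \<Rightarrow> nat \<Rightarrow> bool" where
  "mat_rlinear n f p q \<longleftrightarrow> (\<forall>A \<in> carrier_mat n n. f A \<in> carrier_mat p q)
     \<and> (\<forall>A \<in> carrier_mat n n. \<forall>B \<in> carrier_mat n n. f (A + B) = f A + f B)
     \<and> (\<forall>a::real. \<forall>A \<in> carrier_mat n n. f (complex_of_real a \<cdot>\<^sub>m A) = a \<cdot>\<^sub>m f A)"

lemma mat_rlinearD:
  assumes "mat_rlinear n f p q" "A \<in> carrier_mat n n" "B \<in> carrier_mat n n"
  shows "f A \<in> carrier_mat p q" "dim_row (f A) = p" "dim_col (f A) = q"
    "f (A + B) = f A + f B" "f (complex_of_real a \<cdot>\<^sub>m A) = a \<cdot>\<^sub>m f A"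
  using assms unfolding mat_rlinear_def by auto

lemma mat_rlinear_Re_mat:
  assumes "mat_clinear n f p q" shows "mat_rlinear n (\<lambda>R. Re_mat (f R)) p q"
  unfolding mat_rlinear_def using mat_clinearD[OF assms] by (auto intro!: eq_matI)

lemma mat_rlinear_Im_mat:
  assumes "mat_clinear n f p q" shows "mat_rlinear n (\<lambda>R. Im_mat (f R)) p q"
  unfolding mat_rlinear_def using mat_clinearD[OF assms] by (auto intro!: eq_matI)

lemma mat_rlinear_transpose:
  assumes "mat_rlinear n f p q" shows "mat_rlinear n (\<lambda>R. transpose_mat (f R)) q p"
  unfolding mat_rlinear_def using mat_rlinearD[OF assms] by (auto intro!: eq_matI)

lemma mat_rlinear_uminus:
  assumes "mat_rlinear n f p q" shows "mat_rlinear n (\<lambda>R. - f R) p q"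
  unfolding mat_rlinear_def using mat_rlinearD[OF assms] by (auto intro!: eq_matI)

lemma mat_rlinear_block4:
  assumes lin: "\<And>p q. p < 4 \<Longrightarrow> q < 4 \<Longrightarrow> mat_rlinear n (\<lambda>R. bl R ! p ! q) M M"
  shows "mat_rlinear n (\<lambda>R. block4 M (bl R)) (4*M) (4*M)"
  unfolding mat_rlinear_def
proof (intro conjI ballI allI)
  fix A B :: "complex mat" and a :: real
  assume A: "A \<in> carrier_mat n n" and B: "B \<in> carrier_mat n n"
  show "block4 M (bl A) \<in> carrier_mat (4*M) (4*M)" by auto
  show "block4 M (bl (A + B)) = block4 M (bl A) + block4 M (bl B)"
  proof (rule eq_matI)
    fix i j assume "i < dim_row (block4 M (bl A) + block4 M (bl B))" "j < dim_col (block4 M (bl A) + block4 M (bl B))"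
    then have ij: "i < 4*M" "j < 4*M" by auto
    note bd = block_index_bounds[OF ij(1)] block_index_bounds[OF ij(2)]
    show "block4 M (bl (A + B)) $$ (i, j) = (block4 M (bl A) + block4 M (bl B)) $$ (i, j)"
      using mat_rlinearD[OF lin[OF bd(1) bd(3)] A B] mat_rlinearD(2,3)[OF lin[OF bd(1) bd(3)] B A] ij bd
      by (simp add: index_block4)
  qed auto
  show "block4 M (bl (complex_of_real a \<cdot>\<^sub>m A)) = a \<cdot>\<^sub>m block4 M (bl A)"
  proof (rule eq_matI)
    fix i j assume "i < dim_row (a \<cdot>\<^sub>m block4 M (bl A))" "j < dim_col (a \<cdot>\<^sub>m block4 M (bl A))"
    then have ij: "i < 4*M" "j < 4*M" by auto
    note bd = block_index_bounds[OF ij(1)] block_index_bounds[OF ij(2)]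
    show "block4 M (bl (complex_of_real a \<cdot>\<^sub>m A)) $$ (i, j) = (a \<cdot>\<^sub>m block4 M (bl A)) $$ (i, j)"
      using mat_rlinearD[OF lin[OF bd(1) bd(3)] A A] ij bd by (simp add: index_block4)
  qed auto
qed

lemmas mat_clinear_intros = mat_clinear_add mat_clinear_hadamard mat_clinear_transpose
  mat_clinear_mult_right mat_clinear_mult_left mult_carrier_mat mat_adjoint_carrier

lemma F11g_clinear:
  assumes "sensing_dims Nt Nr M S" "Ad \<in> carrier_mat Nt M" "Bd \<in> carrier_mat Nr M"
  shows "mat_clinear Nt (\<lambda>R. F11g S R Ad Bd) M M"
  unfolding F11g_def Let_def by (rule mat_clinear_intros sensing_dimsD[OF assms(1)] assms(2,3))+

lemma F12m_clinear:
  assumes "sensing_dims Nt Nr M S"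
  shows "mat_clinear Nt (F12m S) M M"
  unfolding F12m_def Let_def by (rule mat_clinear_intros sensing_dimsD[OF assms])+

lemma F13g_clinear:
  assumes "sensing_dims Nt Nr M S" "Ad \<in> carrier_mat Nt M" "Bd \<in> carrier_mat Nr M"
  shows "mat_clinear Nt (\<lambda>R. F13g S R Ad Bd) M M"
  unfolding F13g_def Let_def by (rule mat_clinear_intros sensing_dimsD[OF assms(1)] assms(2,3))+

lemma F33m_clinear:
  assumes "sensing_dims Nt Nr M S"
  shows "mat_clinear Nt (F33m S) M M"
  unfolding F33m_def by (rule mat_clinear_intros sensing_dimsD[OF assms])+

definition fisher_blocks :: "sensing \<Rightarrow> complex mat \<Rightarrow> real mat list list" where
  "fisher_blocks S Rx = (let
      F11 = F11g S Rx (sAt S) (sBt S); F22 = F11g S Rx (sAp S) (sBp S);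
      F12 = F12m S Rx;
      F13 = F13g S Rx (sAt S) (sBt S); F23 = F13g S Rx (sAp S) (sBp S);
      F33 = F33m S Rx;
      T = transpose_mat in
     [[Re_mat F11, Re_mat F12, Re_mat F13, - Im_mat F13],
      [T (Re_mat F12), Re_mat F22, Re_mat F23, - Im_mat F23],
      [T (Re_mat F13), T (Re_mat F23), Re_mat F33, - Im_mat F33],
      [- T (Im_mat F13), - T (Im_mat F23), - T (Im_mat F33), Re_mat F33]])"

definition fisher_core :: "nat \<Rightarrow> sensing \<Rightarrow> complex mat \<Rightarrow> real mat" where
  "fisher_core M S Rx = block4 M (fisher_blocks S Rx)"

lemma FIM_eq_fisher_core: "FIM M L ss2 S W = (2 * real L / ss2) \<cdot>\<^sub>m fisher_core M S (W * cH W)"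
  by (simp add: FIM_def fisher_core_def fisher_blocks_def Let_def)

lemma FIM_carrier: "FIM M L ss2 S W \<in> carrier_mat (4*M) (4*M)"
  by (simp add: FIM_eq_fisher_core fisher_core_def)

lemma fisher_blocks_rlinear:
  assumes S: "sensing_dims Nt Nr M S" and "p < 4" "q < 4"
  shows "mat_rlinear Nt (\<lambda>R. fisher_blocks S R ! p ! q) M M"
proof -
  note d = sensing_dimsD[OF S]
  note lin = F11g_clinear[OF S d(2,5)] F11g_clinear[OF S d(3,6)] F12m_clinear[OF S]
    F13g_clinear[OF S d(2,5)] F13g_clinear[OF S d(3,6)] F33m_clinear[OF S]
  show ?thesis
    using \<open>p < 4\<close> \<open>q < 4\<close> lin unfolding less_4_cases fisher_blocks_def Let_def
    by (elim disjE) (simp_all add: mat_rlinear_uminus mat_rlinear_transpose mat_rlinear_Re_mat mat_rlinear_Im_mat)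
qed

lemma fisher_core_rlinear:
  "sensing_dims Nt Nr M S \<Longrightarrow> mat_rlinear Nt (fisher_core M S) (4*M) (4*M)"
  unfolding fisher_core_def by (rule mat_rlinear_block4) (rule fisher_blocks_rlinear)

lemma fisher_core_quadratic:
  assumes S: "sensing_dims Nt Nr M S"
    and R: "R0 \<in> carrier_mat Nt Nt" "R1 \<in> carrier_mat Nt Nt" "R2 \<in> carrier_mat Nt Nt"
  shows "fisher_core M S (R0 + complex_of_real t \<cdot>\<^sub>m R1 + complex_of_real (t^2) \<cdot>\<^sub>m R2)
    = fisher_core M S R0 + t \<cdot>\<^sub>m fisher_core M S R1 + t^2 \<cdot>\<^sub>m fisher_core M S R2"
proof -
  note L = mat_rlinearD[OF fisher_core_rlinear[OF S]]
  have "fisher_core M S (R0 + complex_of_real t \<cdot>\<^sub>m R1 + complex_of_real (t^2) \<cdot>\<^sub>m R2)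
      = fisher_core M S (R0 + complex_of_real t \<cdot>\<^sub>m R1) + fisher_core M S (complex_of_real (t^2) \<cdot>\<^sub>m R2)"
    using R by (intro L) auto
  also have "fisher_core M S (R0 + complex_of_real t \<cdot>\<^sub>m R1) = fisher_core M S R0 + t \<cdot>\<^sub>m fisher_core M S R1"
    using R L[of R0 "complex_of_real t \<cdot>\<^sub>m R1"] L[of R1 R1] by simp
  also have "fisher_core M S (complex_of_real (t^2) \<cdot>\<^sub>m R2) = t^2 \<cdot>\<^sub>m fisher_core M S R2"
    using R L[of R2 R2] by (simp del: of_real_power)
  finally show ?thesis .
qed

lemma mat_adjoint_sandwich5:
  assumes U: "U \<in> carrier_mat M M" and A1: "A1 \<in> carrier_mat n M" and A2: "A2 \<in> carrier_mat n M"
    and R: "R \<in> carrier_mat n n" and H: "cH R = R"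
  shows "cH (U * cH A1 * R * A2 * cH U) = U * cH A2 * R * A1 * cH U"
proof -
  have V: "U * cH A1 \<in> carrier_mat M n" using U A1 by auto
  have Z: "U * cH A1 * R \<in> carrier_mat M n" using V R by auto
  have X: "U * cH A1 * R * A2 \<in> carrier_mat M M" using Z A2 by auto
  have "cH (U * cH A1 * R * A2 * cH U) = U * cH (U * cH A1 * R * A2)"
    using mat_adjoint_mult[OF X mat_adjoint_carrier[OF U]] by simp
  also have "cH (U * cH A1 * R * A2) = cH A2 * cH (U * cH A1 * R)" by (rule mat_adjoint_mult[OF Z A2])
  also have "cH (U * cH A1 * R) = cH R * cH (U * cH A1)" by (rule mat_adjoint_mult[OF V R])
  also have "cH (U * cH A1) = A1 * cH U" using mat_adjoint_mult[OF U mat_adjoint_carrier[OF A1]] by simp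
  finally have e: "cH (U * cH A1 * R * A2 * cH U) = U * (cH A2 * (R * (A1 * cH U)))" using H by simp
  have c1: "A1 * cH U \<in> carrier_mat n M" using A1 U by auto
  have c2: "U * cH A2 \<in> carrier_mat M n" using A2 U by auto
  have c3: "U * cH A2 * R \<in> carrier_mat M n" using c2 R by auto
  have "U * (cH A2 * (R * (A1 * cH U))) = U * cH A2 * (R * (A1 * cH U))"
    using assoc_mult_mat[OF U mat_adjoint_carrier[OF A2] mult_carrier_mat[OF R c1], symmetric] .
  also have "\<dots> = U * cH A2 * R * (A1 * cH U)" using assoc_mult_mat[OF c2 R c1, symmetric] .
  also have "\<dots> = U * cH A2 * R * A1 * cH U" using assoc_mult_mat[OF c3 A1 mat_adjoint_carrier[OF U], symmetric] .
  finally show ?thesis using e by simp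
qed

lemma mat_adjoint_sandwich3:
  assumes A: "A \<in> carrier_mat n M" and R: "R \<in> carrier_mat n n" and H: "cH R = R"
  shows "cH (cH A * R * A) = cH A * R * A"
proof -
  have "cH (cH A * R * A) = cH A * cH (cH A * R)" using mat_adjoint_mult[OF mult_carrier_mat[OF mat_adjoint_carrier[OF A] R] A] .
  also have "cH (cH A * R) = R * A" using mat_adjoint_mult[OF mat_adjoint_carrier[OF A] R] H by simp
  finally show ?thesis using assoc_mult_mat[OF mat_adjoint_carrier[OF A] R A] by simp
qed

lemma mat_adjoint_add:
  "A \<in> carrier_mat n m \<Longrightarrow> B \<in> carrier_mat n m \<Longrightarrow> cH (A + B) = cH A + cH B"
  by (rule eq_matI) auto

lemma mat_adjoint_transpose_hadamard:
  "X \<in> carrier_mat M M \<Longrightarrow> Y \<in> carrier_mat M M \<Longrightarrow> cH (transpose_mat X \<odot> Y) = transpose_mat (cH X) \<odot> cH Y"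
  by (rule eq_matI) auto

lemma F11g_hermitian:
  assumes S: "sensing_dims Nt Nr M S" and Ad: "Ad \<in> carrier_mat Nt M" and Bd: "Bd \<in> carrier_mat Nr M"
    and R: "R \<in> carrier_mat Nt Nt" and H: "cH R = R"
  shows "cH (F11g S R Ad Bd) = F11g S R Ad Bd"
proof -
  have c: "sA S \<in> carrier_mat Nt M" "sB S \<in> carrier_mat Nr M" "sU S \<in> carrier_mat M M"
    using sensing_dimsD[OF S] by auto
  define X1 where "X1 = sU S * cH (sA S) * R * sA S * cH (sU S)"
  define X2 where "X2 = sU S * cH (sA S) * R * Ad * cH (sU S)"
  define X3 where "X3 = sU S * cH Ad * R * sA S * cH (sU S)"
  define X4 where "X4 = sU S * cH Ad * R * Ad * cH (sU S)"
  define Y1 where "Y1 = cH Bd * Bd"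
  define Y2 where "Y2 = cH (sB S) * Bd"
  define Y3 where "Y3 = cH Bd * sB S"
  define Y4 where "Y4 = cH (sB S) * sB S"
  have Xc: "X1 \<in> carrier_mat M M" "X2 \<in> carrier_mat M M" "X3 \<in> carrier_mat M M" "X4 \<in> carrier_mat M M"
    "Y1 \<in> carrier_mat M M" "Y2 \<in> carrier_mat M M" "Y3 \<in> carrier_mat M M" "Y4 \<in> carrier_mat M M"
    unfolding X1_def X2_def X3_def X4_def Y1_def Y2_def Y3_def Y4_def using c Ad Bd R by auto
  have hX: "cH X1 = X1" "cH X2 = X3" "cH X3 = X2" "cH X4 = X4" "cH Y1 = Y1" "cH Y2 = Y3" "cH Y3 = Y2" "cH Y4 = Y4"
    unfolding X1_def X2_def X3_def X4_def Y1_def Y2_def Y3_def Y4_def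
    using mat_adjoint_sandwich5[OF c(3) _ _ R H] mat_adjoint_gram c Ad Bd by auto
  have F: "F11g S R Ad Bd = transpose_mat X1 \<odot> Y1 + transpose_mat X2 \<odot> Y2 + transpose_mat X3 \<odot> Y3
      + transpose_mat X4 \<odot> Y4"
    unfolding F11g_def Let_def X1_def X2_def X3_def X4_def Y1_def Y2_def Y3_def Y4_def ..
  have "cH (F11g S R Ad Bd) = transpose_mat X1 \<odot> Y1 + transpose_mat X3 \<odot> Y3 + transpose_mat X2 \<odot> Y2
      + transpose_mat X4 \<odot> Y4"
    unfolding F using Xc
    by (simp add: mat_adjoint_add[of _ M M] add_carrier_mat mat_adjoint_transpose_hadamard[of _ M] hX)
  also have "\<dots> = F11g S R Ad Bd"
    unfolding F using Xc[THEN carrier_matD(1)] Xc[THEN carrier_matD(2)] by (intro eq_matI) auto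
  finally show ?thesis .
qed

lemma F33m_hermitian:
  assumes S: "sensing_dims Nt Nr M S" and R: "R \<in> carrier_mat Nt Nt" and H: "cH R = R"
  shows "cH (F33m S R) = F33m S R"
proof -
  have c: "sA S \<in> carrier_mat Nt M" "sB S \<in> carrier_mat Nr M"
    using sensing_dimsD[OF S] by auto
  have "cH (cH (sA S) * R * sA S) = cH (sA S) * R * sA S" "cH (cH (sB S) * sB S) = cH (sB S) * sB S"
    using mat_adjoint_sandwich3[OF c(1) R H] mat_adjoint_gram[OF c(2) c(2)] by auto
  moreover have "cH (sA S) * R * sA S \<in> carrier_mat M M" "cH (sB S) * sB S \<in> carrier_mat M M"
    using c R by auto
  ultimately show ?thesis
    unfolding F33m_def by (simp add: mat_adjoint_transpose_hadamard[of _ M])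
qed

lemma Re_mat_hermitian_symmetric:
  "cH C = C \<Longrightarrow> C \<in> carrier_mat M M \<Longrightarrow> transpose_mat (Re_mat C) = Re_mat C"
proof (rule eq_matI)
  fix i j assume H: "cH C = C" and C: "C \<in> carrier_mat M M"
    and "i < dim_row (Re_mat C)" "j < dim_col (Re_mat C)"
  then have ij: "i < M" "j < M" by auto
  have "cnj (C $$ (i,j)) = C $$ (j,i)" using mat_adjoint_eq_index[OF H C] ij by auto
  then have "Re (C $$ (j,i)) = Re (C $$ (i,j))" by (metis complex_cnj_cancel_iff complex_cnj_complex_of_real Re_complex_of_real cnj.simps(1))
  then show "transpose_mat (Re_mat C) $$ (i, j) = Re_mat C $$ (i, j)" using ij C by auto
qed auto

lemma block4_symmetric:
  assumes c: "\<And>p q. p < 4 \<Longrightarrow> q < 4 \<Longrightarrow> bl ! p ! q \<in> carrier_mat M M"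
    and s: "\<And>p q. p < 4 \<Longrightarrow> q < 4 \<Longrightarrow> transpose_mat (bl ! q ! p) = bl ! p ! q"
  shows "transpose_mat (block4 M bl) = block4 M bl"
proof (rule eq_matI)
  fix i j assume "i < dim_row (block4 M bl)" "j < dim_col (block4 M bl)"
  then have ij: "i < 4*M" "j < 4*M" by auto
  note bd = block_index_bounds[OF ij(1)] block_index_bounds[OF ij(2)]
  have "transpose_mat (block4 M bl) $$ (i,j) = transpose_mat (bl ! (j div M) ! (i div M)) $$ (i mod M, j mod M)"
    using ij bd c[OF bd(3,1)] by (simp add: index_block4)
  also have "\<dots> = block4 M bl $$ (i,j)" using ij s[OF bd(1,3)] by (simp add: index_block4)
  finally show "transpose_mat (block4 M bl) $$ (i,j) = block4 M bl $$ (i,j)" .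
qed auto

lemma fisher_core_symmetric:
  assumes S: "sensing_dims Nt Nr M S" and R: "R \<in> carrier_mat Nt Nt" and H: "cH R = R"
  shows "transpose_mat (fisher_core M S R) = fisher_core M S R"
  unfolding fisher_core_def
proof (rule block4_symmetric)
  show "fisher_blocks S R ! p ! q \<in> carrier_mat M M" if "p < 4" "q < 4" for p q
    using mat_rlinearD(1)[OF fisher_blocks_rlinear[OF S that] R R] .
  note d = sensing_dimsD[OF S]
  have "transpose_mat (Re_mat (F11g S R Ad Bd)) = Re_mat (F11g S R Ad Bd)"
    if "Ad \<in> carrier_mat Nt M" "Bd \<in> carrier_mat Nr M" for Ad Bd
    using Re_mat_hermitian_symmetric F11g_hermitian[OF S that R H] mat_clinearD(1)[OF F11g_clinear[OF S that] R R] .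
  moreover have "transpose_mat (Re_mat (F33m S R)) = Re_mat (F33m S R)"
    using Re_mat_hermitian_symmetric F33m_hermitian[OF S R H] mat_clinearD(1)[OF F33m_clinear[OF S] R R] .
  ultimately show "transpose_mat (fisher_blocks S R ! q ! p) = fisher_blocks S R ! p ! q"
    if "p < 4" "q < 4" for p q
    using that d unfolding less_4_cases fisher_blocks_def Let_def
    by (elim disjE) (simp_all add: transpose_uminus)
qed

lemma FIM_symmetric:
  assumes S: "sensing_dims Nt Nr M S" and W: "W \<in> carrier_mat Nt m"
  shows "transpose_mat (FIM M L ss2 S W) = FIM M L ss2 S W"
proof -
  have "cH (W * cH W) = W * cH W" using mat_adjoint_mult[OF W mat_adjoint_carrier[OF W]] by simp
  then have "transpose_mat (fisher_core M S (W * cH W)) = fisher_core M S (W * cH W)"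
    using fisher_core_symmetric[OF S] W by auto
  moreover have "transpose_mat (a \<cdot>\<^sub>m X) = a \<cdot>\<^sub>m transpose_mat X" for a :: real and X
    by (rule eq_matI) auto
  ultimately show ?thesis unfolding FIM_eq_fisher_core by simp
qed

section \<open>The matrix Q as the adjoint of the Fisher information map\<close>

definition frob :: "nat \<Rightarrow> 'a::comm_ring_1 mat \<Rightarrow> 'a mat \<Rightarrow> 'a" where
  "frob M P Z = (\<Sum>r<M. \<Sum>c<M. P $$ (r,c) * Z $$ (r,c))"

lemma frob_add_right:
  "Z1 \<in> carrier_mat M M \<Longrightarrow> Z2 \<in> carrier_mat M M \<Longrightarrow> frob M P (Z1 + Z2) = frob M P Z1 + frob M P Z2"
  by (simp add: frob_def distrib_left sum.distrib)

lemma frob_add_left: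
  "P1 \<in> carrier_mat M M \<Longrightarrow> P2 \<in> carrier_mat M M \<Longrightarrow> frob M (P1 + P2) Z = frob M P1 Z + frob M P2 Z"
  by (simp add: frob_def distrib_right sum.distrib)

lemma frob_smult_left:
  "P \<in> carrier_mat M M \<Longrightarrow> frob M (a \<cdot>\<^sub>m P) Z = a * frob M P Z"
  by (simp add: frob_def sum_distrib_left mult.assoc)

lemma frob_transpose:
  "P \<in> carrier_mat M M \<Longrightarrow> Z \<in> carrier_mat M M \<Longrightarrow> frob M P (transpose_mat Z) = frob M (transpose_mat P) Z"
  unfolding frob_def by (subst sum.swap) (simp add: mult.commute)

lemma frob_uminus: "Z \<in> carrier_mat M M \<Longrightarrow> frob M P (- Z) = - frob M P Z"
  by (simp add: frob_def sum_negf)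

lemma frob_Re_mat:
  "P \<in> carrier_mat M M \<Longrightarrow> Z \<in> carrier_mat M M \<Longrightarrow> frob M P (Re_mat Z) = Re (frob M (cmat P) Z)"
  by (simp add: frob_def Re_sum)

lemma frob_Im_mat:
  "P \<in> carrier_mat M M \<Longrightarrow> Z \<in> carrier_mat M M \<Longrightarrow> frob M P (Im_mat Z) = Im (frob M (cmat P) Z)"
  by (simp add: frob_def Im_sum)

lemma frob_transpose_hadamard:
  "P \<in> carrier_mat M M \<Longrightarrow> X \<in> carrier_mat M M \<Longrightarrow> Y \<in> carrier_mat M M \<Longrightarrow>
   frob M P (transpose_mat X \<odot> Y) = mtrace ((P \<odot> Y) * X)"
  by (simp add: frob_def mtrace_def index_mult_mat_sum ac_simps del: index_mult_mat(1))

lemma mtrace_mult_block4: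
  fixes Phi :: "real mat"
  assumes Pc: "Phi \<in> carrier_mat (4*M) (4*M)" and Ps: "transpose_mat Phi = Phi"
  shows "mtrace (Phi * block4 M bl) = (\<Sum>q<4. \<Sum>p<4. frob M (blk M Phi (q+1) (p+1)) (bl ! q ! p))"
proof -
  have "mtrace (Phi * block4 M bl) = (\<Sum>i<4*M. \<Sum>j<4*M. Phi $$ (i,j) * block4 M bl $$ (j,i))"
    using mtrace_mult_sum[OF Pc block4_carrier] .
  also have "\<dots> = (\<Sum>j<4*M. \<Sum>i<4*M. Phi $$ (j,i) * block4 M bl $$ (j,i))"
    using transpose_symmetric_index[OF Ps Pc] by (subst sum.swap) (simp add: mult.commute)
  also have "\<dots> = (\<Sum>q<4. \<Sum>c<M. \<Sum>p<4. \<Sum>r<M. Phi $$ (c + q*M, r + p*M) * block4 M bl $$ (c + q*M, r + p*M))"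
    by (simp add: sum_mult_product[of _ 4 M])
  also have "\<dots> = (\<Sum>q<4. \<Sum>c<M. \<Sum>p<4. \<Sum>r<M. Phi $$ (c + q*M, r + p*M) * (bl ! q ! p) $$ (c, r))"
    by (intro sum.cong refl) (simp add: index_block4_offset)
  also have "\<dots> = (\<Sum>q<4. \<Sum>p<4. \<Sum>c<M. \<Sum>r<M. Phi $$ (c + q*M, r + p*M) * (bl ! q ! p) $$ (c, r))"
    by (rule sum.cong[OF refl]) (rule sum.swap)
  also have "\<dots> = (\<Sum>q<4. \<Sum>p<4. frob M (blk M Phi (q+1) (p+1)) (bl ! q ! p))"
    by (simp add: frob_def add.commute)
  finally show ?thesis .
qed

lemma blk_transpose:
  assumes "Phi \<in> carrier_mat (4*M) (4*M)" "transpose_mat Phi = Phi" "1 \<le> p" "p \<le> 4" "1 \<le> q" "q \<le> 4"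
  shows "transpose_mat (blk M Phi p q) = blk M Phi q p"
proof (rule eq_matI)
  fix r c assume "r < dim_row (blk M Phi q p)" "c < dim_col (blk M Phi q p)"
  then have rc: "r < M" "c < M" by auto
  have "r + (q - 1) * M < 4 * M" "c + (p - 1) * M < 4 * M"
    using assms rc by (auto intro!: block_offset_less)
  then show "transpose_mat (blk M Phi p q) $$ (r, c) = blk M Phi q p $$ (r, c)"
    using transpose_symmetric_index[OF assms(2,1)] rc by (simp add: add.commute)
qed auto

lemma frob_F11g:
  assumes S: "sensing_dims Nt Nr M S" and Ad: "Ad \<in> carrier_mat Nt M" and Bd: "Bd \<in> carrier_mat Nr M"
    and P: "P \<in> carrier_mat M M" and R: "R \<in> carrier_mat Nt Nt"
  shows "frob M P (F11g S R Ad Bd) = mtrace (Q11g S P Ad Bd * R)"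
proof -
  have c: "sA S \<in> carrier_mat Nt M" "sB S \<in> carrier_mat Nr M" "sU S \<in> carrier_mat M M"
    using sensing_dimsD[OF S] by auto
  have cs: "sU S * cH (sA S) * R * sA S * cH (sU S) \<in> carrier_mat M M"
     "sU S * cH (sA S) * R * Ad * cH (sU S) \<in> carrier_mat M M"
     "sU S * cH Ad * R * sA S * cH (sU S) \<in> carrier_mat M M"
     "sU S * cH Ad * R * Ad * cH (sU S) \<in> carrier_mat M M"
     "cH Bd * Bd \<in> carrier_mat M M" "cH (sB S) * Bd \<in> carrier_mat M M"
     "cH Bd * sB S \<in> carrier_mat M M" "cH (sB S) * sB S \<in> carrier_mat M M"
    using c Ad Bd R by auto
  have qs: "sA S * cH (sU S) * (P \<odot> (cH Bd * Bd)) * sU S * cH (sA S) \<in> carrier_mat Nt Nt"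
    "Ad * cH (sU S) * (P \<odot> (cH (sB S) * Bd)) * sU S * cH (sA S) \<in> carrier_mat Nt Nt"
    "sA S * cH (sU S) * (P \<odot> (cH Bd * sB S)) * sU S * cH Ad \<in> carrier_mat Nt Nt"
    "Ad * cH (sU S) * (P \<odot> (cH (sB S) * sB S)) * sU S * cH Ad \<in> carrier_mat Nt Nt"
    using c Ad Bd P by auto
  show ?thesis unfolding F11g_def Q11g_def Let_def
    using c cs qs Ad Bd R P
    by (simp add: frob_add_right frob_transpose_hadamard mtrace_rotate5[of _ M _ M _ Nt] mtrace_add_mult[of _ Nt] del: assoc_mult_mat)
qed

lemma mtrace_Q12m:
  assumes S: "sensing_dims Nt Nr M S"
    and P: "P \<in> carrier_mat M M" and R: "R \<in> carrier_mat Nt Nt"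
  shows "mtrace (Q12m S P * R) = 2 * frob M P (F12m S R)"
proof -
  have c: "sA S \<in> carrier_mat Nt M" "sB S \<in> carrier_mat Nr M" "sU S \<in> carrier_mat M M"
    "sAt S \<in> carrier_mat Nt M" "sBt S \<in> carrier_mat Nr M" "sAp S \<in> carrier_mat Nt M" "sBp S \<in> carrier_mat Nr M"
    using sensing_dimsD[OF S] by auto
  have cs: "sU S * cH (sA S) * R * sA S * cH (sU S) \<in> carrier_mat M M"
     "sU S * cH (sA S) * R * sAt S * cH (sU S) \<in> carrier_mat M M"
     "sU S * cH (sAp S) * R * sA S * cH (sU S) \<in> carrier_mat M M"
     "sU S * cH (sAp S) * R * sAt S * cH (sU S) \<in> carrier_mat M M"
     "cH (sBt S) * sBp S \<in> carrier_mat M M" "cH (sB S) * sBp S \<in> carrier_mat M M"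
     "cH (sBt S) * sB S \<in> carrier_mat M M" "cH (sB S) * sB S \<in> carrier_mat M M"
    using c R by auto
  have qs: "sA S * cH (sU S) * (P \<odot> (cH (sBt S) * sBp S)) * sU S * cH (sA S) \<in> carrier_mat Nt Nt"
    "sAt S * cH (sU S) * (P \<odot> (cH (sB S) * sBp S)) * sU S * cH (sA S) \<in> carrier_mat Nt Nt"
    "sA S * cH (sU S) * (P \<odot> (cH (sBt S) * sB S)) * sU S * cH (sAp S) \<in> carrier_mat Nt Nt"
    "sAt S * cH (sU S) * (P \<odot> (cH (sB S) * sB S)) * sU S * cH (sAp S) \<in> carrier_mat Nt Nt"
    using c P by auto
  have sm: "mtrace ((2 \<cdot>\<^sub>m X) * R) = 2 * mtrace (X * R)" if "X \<in> carrier_mat Nt Nt" for X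
    using mtrace_smult_mult[OF that R] .
  show ?thesis unfolding F12m_def Q12m_def Let_def
    using c cs qs R P
    by (simp add: sm frob_add_right frob_transpose_hadamard mtrace_rotate5[of _ M _ M _ Nt] mtrace_add_mult[of _ Nt] del: assoc_mult_mat)
qed

lemma mtrace_Q13g:
  assumes S: "sensing_dims Nt Nr M S" and Ad: "Ad \<in> carrier_mat Nt M" and Bd: "Bd \<in> carrier_mat Nr M"
    and P3: "P3 \<in> carrier_mat M M" and P4: "P4 \<in> carrier_mat M M" and R: "R \<in> carrier_mat Nt Nt"
  shows "mtrace (Q13g S P3 P4 Ad Bd * R) = frob M (2 \<cdot>\<^sub>m P3 + (2 * \<i>) \<cdot>\<^sub>m P4) (F13g S R Ad Bd)"
proof -
  define P where "P = 2 \<cdot>\<^sub>m P3 + (2 * \<i>) \<cdot>\<^sub>m P4"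
  have P: "P \<in> carrier_mat M M" using P3 P4 by (simp add: P_def)
  have c: "sA S \<in> carrier_mat Nt M" "sB S \<in> carrier_mat Nr M" "sU S \<in> carrier_mat M M"
    using sensing_dimsD[OF S] by auto
  have cs: "cH (sA S) * R * sA S * cH (sU S) \<in> carrier_mat M M"
     "cH (sA S) * R * Ad * cH (sU S) \<in> carrier_mat M M"
     "cH Bd * sB S \<in> carrier_mat M M" "cH (sB S) * sB S \<in> carrier_mat M M"
    using c Ad Bd R by auto
  have qs: "sA S * cH (sU S) * (P \<odot> (cH Bd * sB S)) * cH (sA S) \<in> carrier_mat Nt Nt"
    "Ad * cH (sU S) * (P \<odot> (cH (sB S) * sB S)) * cH (sA S) \<in> carrier_mat Nt Nt"
    using c P Ad Bd by auto
  show ?thesis unfolding F13g_def Q13g_def Let_def P_def[symmetric]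
    using c cs qs Ad Bd R P
    by (simp add: frob_add_right frob_transpose_hadamard mtrace_rotate4[of _ M _ Nt] mtrace_add_mult[of _ Nt] del: assoc_mult_mat)
qed

lemma mtrace_Q33m:
  assumes S: "sensing_dims Nt Nr M S"
    and P33: "P33 \<in> carrier_mat M M" and P44: "P44 \<in> carrier_mat M M" and P34: "P34 \<in> carrier_mat M M"
    and R: "R \<in> carrier_mat Nt Nt"
  shows "mtrace (Q33m S P33 P44 P34 * R) = frob M (P33 + P44 + (2 * \<i>) \<cdot>\<^sub>m P34) (F33m S R)"
proof -
  define P where "P = P33 + P44 + (2 * \<i>) \<cdot>\<^sub>m P34"
  have P: "P \<in> carrier_mat M M" using P33 P44 P34 by (simp add: P_def)
  have c: "sA S \<in> carrier_mat Nt M" "sB S \<in> carrier_mat Nr M"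
    using sensing_dimsD[OF S] by auto
  have cs: "cH (sA S) * R * sA S \<in> carrier_mat M M" "cH (sB S) * sB S \<in> carrier_mat M M"
    using c R by auto
  show ?thesis unfolding F33m_def Q33m_def Let_def P_def[symmetric]
    using c cs R P
    by (simp add: frob_transpose_hadamard mtrace_rotate3[of _ M _ Nt] del: assoc_mult_mat)
qed

definition Q_core :: "nat \<Rightarrow> sensing \<Rightarrow> real mat \<Rightarrow> complex mat" where
  "Q_core M S Phi = (let P = (\<lambda>p q. cmat (blk M Phi p q)) in
      Q11g S (P 1 1) (sAt S) (sBt S) + Q12m S (P 1 2) + Q13g S (P 1 3) (P 1 4) (sAt S) (sBt S)
     + Q11g S (P 2 2) (sAp S) (sBp S) + Q13g S (P 2 3) (P 2 4) (sAp S) (sBp S)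
     + Q33m S (P 3 3) (P 4 4) (P 3 4))"

lemma Qmat_Q_core: "Qmat M L ss2 S W = complex_of_real (2 * real L / ss2) \<cdot>\<^sub>m
   Q_core M S (minv (FIM M L ss2 S W) * minv (FIM M L ss2 S W))"
  by (simp add: Qmat_def Q_core_def Let_def)

lemma Q_carrier:
  assumes S: "sensing_dims Nt Nr M S" and Ad: "Ad \<in> carrier_mat Nt M" and Bd: "Bd \<in> carrier_mat Nr M"
    and P: "P \<in> carrier_mat M M" "P' \<in> carrier_mat M M" "P'' \<in> carrier_mat M M"
  shows "Q11g S P Ad Bd \<in> carrier_mat Nt Nt" "Q12m S P \<in> carrier_mat Nt Nt"
    "Q13g S P P' Ad Bd \<in> carrier_mat Nt Nt" "Q33m S P P' P'' \<in> carrier_mat Nt Nt"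
proof -
  have c: "sA S \<in> carrier_mat Nt M" "sB S \<in> carrier_mat Nr M" "sU S \<in> carrier_mat M M"
    "sAt S \<in> carrier_mat Nt M" "sBt S \<in> carrier_mat Nr M" "sAp S \<in> carrier_mat Nt M" "sBp S \<in> carrier_mat Nr M"
    using sensing_dimsD[OF S] by auto
  show "Q11g S P Ad Bd \<in> carrier_mat Nt Nt" unfolding Q11g_def Let_def using c Ad Bd P by auto
  show "Q12m S P \<in> carrier_mat Nt Nt" unfolding Q12m_def Let_def using c P by auto
  show "Q13g S P P' Ad Bd \<in> carrier_mat Nt Nt" unfolding Q13g_def Let_def using c Ad Bd P by auto
  show "Q33m S P P' P'' \<in> carrier_mat Nt Nt" unfolding Q33m_def Let_def using c P by auto
qed

lemma Q_core_carrier: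
  assumes S: "sensing_dims Nt Nr M S"
  shows "Q_core M S Phi \<in> carrier_mat Nt Nt"
proof -
  note d = sensing_dimsD[OF S]
  have cP: "\<And>p q. cmat (blk M Phi p q) \<in> carrier_mat M M" by simp
  show ?thesis unfolding Q_core_def Let_def
    using Q_carrier[OF S d(2,5) cP cP cP] Q_carrier[OF S d(3,6) cP cP cP] by simp
qed

lemma mtrace_Q_core_mult:
  fixes Phi :: "real mat"
  assumes S: "sensing_dims Nt Nr M S" and R: "R \<in> carrier_mat Nt Nt"
  defines "P \<equiv> \<lambda>p q. cmat (blk M Phi p q)"
  shows "mtrace (Q_core M S Phi * R) =
      frob M (P 1 1) (F11g S R (sAt S) (sBt S)) + 2 * frob M (P 1 2) (F12m S R)
    + 2 * frob M (P 1 3) (F13g S R (sAt S) (sBt S)) + (2 * \<i>) * frob M (P 1 4) (F13g S R (sAt S) (sBt S))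
    + frob M (P 2 2) (F11g S R (sAp S) (sBp S))
    + 2 * frob M (P 2 3) (F13g S R (sAp S) (sBp S)) + (2 * \<i>) * frob M (P 2 4) (F13g S R (sAp S) (sBp S))
    + (frob M (P 3 3) (F33m S R) + frob M (P 4 4) (F33m S R) + (2 * \<i>) * frob M (P 3 4) (F33m S R))"
proof -
  note d = sensing_dimsD[OF S]
  have P: "\<And>p q. P p q \<in> carrier_mat M M" by (simp add: P_def)
  note QC = Q_carrier[OF S d(2,5) P P P] Q_carrier[OF S d(3,6) P P P]
  have "mtrace (Q_core M S Phi * R) =
      mtrace (Q11g S (P 1 1) (sAt S) (sBt S) * R) + mtrace (Q12m S (P 1 2) * R)
    + mtrace (Q13g S (P 1 3) (P 1 4) (sAt S) (sBt S) * R)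
    + mtrace (Q11g S (P 2 2) (sAp S) (sBp S) * R)
    + mtrace (Q13g S (P 2 3) (P 2 4) (sAp S) (sBp S) * R)
    + mtrace (Q33m S (P 3 3) (P 4 4) (P 3 4) * R)"
    unfolding Q_core_def Let_def P_def using QC[unfolded P_def] R
    by (simp add: mtrace_add_mult[of _ Nt] del: assoc_mult_mat)
  also have "\<dots> = frob M (P 1 1) (F11g S R (sAt S) (sBt S)) + 2 * frob M (P 1 2) (F12m S R)
    + frob M (2 \<cdot>\<^sub>m P 1 3 + (2 * \<i>) \<cdot>\<^sub>m P 1 4) (F13g S R (sAt S) (sBt S))
    + frob M (P 2 2) (F11g S R (sAp S) (sBp S))
    + frob M (2 \<cdot>\<^sub>m P 2 3 + (2 * \<i>) \<cdot>\<^sub>m P 2 4) (F13g S R (sAp S) (sBp S))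
    + frob M (P 3 3 + P 4 4 + (2 * \<i>) \<cdot>\<^sub>m P 3 4) (F33m S R)"
    using frob_F11g[OF S d(2,5) P R] frob_F11g[OF S d(3,6) P R] mtrace_Q12m[OF S P R]
      mtrace_Q13g[OF S d(2,5) P P R] mtrace_Q13g[OF S d(3,6) P P R] mtrace_Q33m[OF S P P P R]
    by simp
  also have "\<dots> = frob M (P 1 1) (F11g S R (sAt S) (sBt S)) + 2 * frob M (P 1 2) (F12m S R)
    + 2 * frob M (P 1 3) (F13g S R (sAt S) (sBt S)) + (2 * \<i>) * frob M (P 1 4) (F13g S R (sAt S) (sBt S))
    + frob M (P 2 2) (F11g S R (sAp S) (sBp S))
    + 2 * frob M (P 2 3) (F13g S R (sAp S) (sBp S)) + (2 * \<i>) * frob M (P 2 4) (F13g S R (sAp S) (sBp S))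
    + (frob M (P 3 3) (F33m S R) + frob M (P 4 4) (F33m S R) + (2 * \<i>) * frob M (P 3 4) (F33m S R))"
    using P by (simp add: frob_add_left frob_smult_left)
  finally show ?thesis .
qed

text \<open>This duality is where \<open>Q\<close> comes from: paired with a symmetric \<open>\<Phi>\<close> (in the application
  \<open>\<Phi> = F\<^sup>-\<^sup>2\<close>), the linear Fisher map becomes \<open>R \<mapsto> Re tr(Q R)\<close>.\<close>

lemma mtrace_mult_fisher_core:
  assumes S: "sensing_dims Nt Nr M S"
    and Pc: "Phi \<in> carrier_mat (4*M) (4*M)" and Ps: "transpose_mat Phi = Phi" and R: "R \<in> carrier_mat Nt Nt"
  shows "mtrace (Phi * fisher_core M S R) = Re (mtrace (Q_core M S Phi * R))"
proof -
  note d = sensing_dimsD[OF S]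
  define C11 where "C11 = F11g S R (sAt S) (sBt S)"
  define C22 where "C22 = F11g S R (sAp S) (sBp S)"
  define C12 where "C12 = F12m S R"
  define C13 where "C13 = F13g S R (sAt S) (sBt S)"
  define C23 where "C23 = F13g S R (sAp S) (sBp S)"
  define C33 where "C33 = F33m S R"
  have Cc: "C11 \<in> carrier_mat M M" "C22 \<in> carrier_mat M M" "C12 \<in> carrier_mat M M"
    "C13 \<in> carrier_mat M M" "C23 \<in> carrier_mat M M" "C33 \<in> carrier_mat M M"
    using mat_clinearD(1)[OF F11g_clinear[OF S d(2,5)] R R] mat_clinearD(1)[OF F11g_clinear[OF S d(3,6)] R R]
      mat_clinearD(1)[OF F12m_clinear[OF S] R R] mat_clinearD(1)[OF F13g_clinear[OF S d(2,5)] R R]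
      mat_clinearD(1)[OF F13g_clinear[OF S d(3,6)] R R] mat_clinearD(1)[OF F33m_clinear[OF S] R R]
    unfolding C11_def C22_def C12_def C13_def C23_def C33_def by auto
  define P where "P p q = blk M Phi p q" for p q
  have Pcar: "\<And>p q. P p q \<in> carrier_mat M M" by (simp add: P_def)
  have PT: "\<And>p q. 1 \<le> p \<Longrightarrow> p \<le> 4 \<Longrightarrow> 1 \<le> q \<Longrightarrow> q \<le> 4 \<Longrightarrow> transpose_mat (P p q) = P q p"
    unfolding P_def by (rule blk_transpose[OF Pc Ps])
  have "mtrace (Phi * fisher_core M S R) =
       frob M (P 1 1) (Re_mat C11) + frob M (P 1 2) (Re_mat C12)
     + frob M (P 1 3) (Re_mat C13) + frob M (P 1 4) (- Im_mat C13)
   + (frob M (P 2 1) (transpose_mat (Re_mat C12)) + frob M (P 2 2) (Re_mat C22)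
     + frob M (P 2 3) (Re_mat C23) + frob M (P 2 4) (- Im_mat C23))
   + (frob M (P 3 1) (transpose_mat (Re_mat C13)) + frob M (P 3 2) (transpose_mat (Re_mat C23))
     + frob M (P 3 3) (Re_mat C33) + frob M (P 3 4) (- Im_mat C33))
   + (frob M (P 4 1) (- transpose_mat (Im_mat C13)) + frob M (P 4 2) (- transpose_mat (Im_mat C23))
     + frob M (P 4 3) (- transpose_mat (Im_mat C33)) + frob M (P 4 4) (Re_mat C33))"
  proof -
    have e: "(0::nat)+1 = 1" "(1::nat)+1 = 2" "(2::nat)+1 = 3" "(3::nat)+1 = 4" by simp_all
    show ?thesis
      unfolding fisher_core_def fisher_blocks_def Let_def mtrace_mult_block4[OF Pc Ps] sum_4 C11_def C22_def C12_def C13_def C23_def C33_def P_def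
      by (simp only: e) simp
  qed
  also have "\<dots> = Re (frob M (cmat (P 1 1)) C11) + 2 * Re (frob M (cmat (P 1 2)) C12) + 2 * Re (frob M (cmat (P 1 3)) C13)
     - 2 * Im (frob M (cmat (P 1 4)) C13) + Re (frob M (cmat (P 2 2)) C22) + 2 * Re (frob M (cmat (P 2 3)) C23)
     - 2 * Im (frob M (cmat (P 2 4)) C23) + Re (frob M (cmat (P 3 3)) C33) - 2 * Im (frob M (cmat (P 3 4)) C33)
     + Re (frob M (cmat (P 4 4)) C33)"
    using Cc Pcar by (simp add: frob_transpose frob_uminus frob_Re_mat frob_Im_mat PT)
  also have "\<dots> = Re (mtrace (Q_core M S Phi * R))"
    using mtrace_Q_core_mult[OF S R, of Phi] by (simp add: P_def C11_def C22_def C12_def C13_def C23_def C33_def)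
  finally show ?thesis .
qed

lemma mtrace_minv_fisher_minv:
  assumes S: "sensing_dims Nt Nr M S" and W: "W \<in> carrier_mat Nt m"
    and d: "det (FIM M L ss2 S W) \<noteq> 0" and R: "R \<in> carrier_mat Nt Nt"
  defines "G \<equiv> minv (FIM M L ss2 S W)"
  shows "mtrace (G * ((2 * real L / ss2) \<cdot>\<^sub>m fisher_core M S R) * G) = Re (mtrace (Qmat M L ss2 S W * R))"
proof -
  define \<kappa> where "\<kappa> = 2 * real L / ss2"
  define Phi where "Phi = G * G"
  note F = FIM_carrier[of M L ss2 S W]
  have G: "G \<in> carrier_mat (4*M) (4*M)" unfolding G_def by (rule minv_carrier[OF F d])
  have Gs: "transpose_mat G = G"
    unfolding G_def by (rule transpose_minv_symmetric[OF F d FIM_symmetric[OF S W]])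
  have Phi: "Phi \<in> carrier_mat (4*M) (4*M)" "transpose_mat Phi = Phi"
    unfolding Phi_def using G transpose_mult[OF G G] Gs by auto
  have FC: "fisher_core M S R \<in> carrier_mat (4*M) (4*M)"
    using mat_rlinearD(1)[OF fisher_core_rlinear[OF S] R R] .
  have "mtrace (G * (\<kappa> \<cdot>\<^sub>m fisher_core M S R) * G) = \<kappa> * mtrace (Phi * fisher_core M S R)"
  proof -
    have "G * (\<kappa> \<cdot>\<^sub>m fisher_core M S R) * G = \<kappa> \<cdot>\<^sub>m (G * fisher_core M S R * G)"
      using mult_smult_distrib[OF G FC] mult_smult_assoc_mat[OF mult_carrier_mat[OF G FC] G] by simp
    moreover have "mtrace (G * fisher_core M S R * G) = mtrace (Phi * fisher_core M S R)"
      using mtrace_mult_comm[OF mult_carrier_mat[OF G FC] G] assoc_mult_mat[OF G G FC] by (simp add: Phi_def)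
    ultimately show ?thesis using mtrace_smult[OF mult_carrier_mat[OF mult_carrier_mat[OF G FC] G]] by simp
  qed
  also have "\<dots> = \<kappa> * Re (mtrace (Q_core M S Phi * R))"
    using mtrace_mult_fisher_core[OF S Phi R] by simp
  also have "\<dots> = Re (mtrace (Qmat M L ss2 S W * R))"
    using mtrace_smult_mult[OF Q_core_carrier[OF S] R]
    by (simp add: Qmat_Q_core Phi_def G_def \<kappa>_def)
  finally show ?thesis unfolding \<kappa>_def .
qed

section \<open>Directional derivatives of the Lagrangian\<close>

lemma mult_adjoint_perturb:
  assumes W: "W \<in> carrier_mat n m" and E: "E \<in> carrier_mat n m"
  shows "(W + (c * complex_of_real t) \<cdot>\<^sub>m E) * cH (W + (c * complex_of_real t) \<cdot>\<^sub>m E)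
    = W * cH W + complex_of_real t \<cdot>\<^sub>m (c \<cdot>\<^sub>m (E * cH W) + cnj c \<cdot>\<^sub>m (W * cH E))
      + complex_of_real (t^2) \<cdot>\<^sub>m ((c * cnj c) \<cdot>\<^sub>m (E * cH E))"
  by (rule eq_matI) (use W E in \<open>auto simp: index_mult_mat_sum sum.distrib sum_distrib_left ring_distribs
      power2_eq_square mult_ac simp del: index_mult_mat(1)\<close>)

lemma mtrace_mult_perturb:
  assumes Q: "Q \<in> carrier_mat n n" and W: "W \<in> carrier_mat n m" and ij: "i < n" "j < m"
  defines "E \<equiv> unitm n m i j"
  shows "Re (mtrace (Q * (c \<cdot>\<^sub>m (E * cH W) + cnj c \<cdot>\<^sub>m (W * cH E))))
     = Re (cnj c * ((Q + cH Q) * W) $$ (i,j))"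
proof -
  have E: "E \<in> carrier_mat n m" "cH E = unitm m n j i" by (simp_all add: E_def mat_adjoint_unitm)
  have EW: "E * cH W \<in> carrier_mat n n" and WE: "W * cH E \<in> carrier_mat n n" using E W by auto
  have "mtrace (Q * (E * cH W)) = (cH W * Q) $$ (j,i)"
    using mtrace_mult_rotate[OF Q E(1) mat_adjoint_carrier[OF W]]
      mtrace_mult_unitm[OF mult_carrier_mat[OF mat_adjoint_carrier[OF W] Q] ij]
    by (simp add: E_def del: index_mult_mat(1))
  also have "\<dots> = cnj ((cH Q * W) $$ (i,j))"
  proof -
    have "cH W * Q = cH (cH Q * W)" using mat_adjoint_mult[OF mat_adjoint_carrier[OF Q] W] by simp
    then show ?thesis using Q W ij by simp
  qed
  finally have tr1: "mtrace (Q * (E * cH W)) = cnj ((cH Q * W) $$ (i,j))" .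
  have "mtrace (Q * (W * cH E)) = mtrace (Q * W * unitm m n j i)"
    using mtrace_mult_rotate[OF Q W mat_adjoint_carrier[OF E(1)]] mtrace_mult_comm[OF mat_adjoint_carrier[OF E(1)] mult_carrier_mat[OF Q W]]
      E(2) assoc_mult_mat[OF unitm_carrier[of m n j i] Q W] by simp
  also have "\<dots> = (Q * W) $$ (i,j)" using Q W ij by (simp add: mtrace_mult_unitm)
  finally have tr2: "mtrace (Q * (W * cH E)) = (Q * W) $$ (i,j)" .
  have "mtrace (Q * (c \<cdot>\<^sub>m (E * cH W) + cnj c \<cdot>\<^sub>m (W * cH E)))
      = c * mtrace (Q * (E * cH W)) + cnj c * mtrace (Q * (W * cH E))"
  proof -
    have "Q * (c \<cdot>\<^sub>m (E * cH W) + cnj c \<cdot>\<^sub>m (W * cH E)) = c \<cdot>\<^sub>m (Q * (E * cH W)) + cnj c \<cdot>\<^sub>m (Q * (W * cH E))"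
      using mult_add_distrib_mat[OF Q smult_carrier_mat[OF EW] smult_carrier_mat[OF WE]]
        mult_smult_distrib[OF Q EW] mult_smult_distrib[OF Q WE] by simp
    then show ?thesis using Q EW WE by (simp add: mtrace_add[of _ n] mtrace_smult[of _ n])
  qed
  moreover have "((Q + cH Q) * W) $$ (i,j) = (Q * W) $$ (i,j) + (cH Q * W) $$ (i,j)"
    using add_mult_distrib_mat[OF Q mat_adjoint_carrier[OF Q] W] ij Q W by simp
  moreover have "Re (c * cnj z) = Re (cnj c * z)" for z by simp
  ultimately show ?thesis using tr1 tr2 by (simp add: ring_distribs)
qed

lemma FIM_perturb:
  fixes L :: nat and ss2 :: real
  assumes S: "sensing_dims Nt Nr M S" and W: "W \<in> carrier_mat Nt m" and E: "E \<in> carrier_mat Nt m"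
  defines "\<kappa> \<equiv> 2 * real L / ss2"
  shows "FIM M L ss2 S (W + (c * complex_of_real t) \<cdot>\<^sub>m E) = FIM M L ss2 S W
      + t \<cdot>\<^sub>m (\<kappa> \<cdot>\<^sub>m fisher_core M S (c \<cdot>\<^sub>m (E * cH W) + cnj c \<cdot>\<^sub>m (W * cH E)))
      + t^2 \<cdot>\<^sub>m (\<kappa> \<cdot>\<^sub>m fisher_core M S ((c * cnj c) \<cdot>\<^sub>m (E * cH E)))"
proof -
  have R: "W * cH W \<in> carrier_mat Nt Nt" "c \<cdot>\<^sub>m (E * cH W) + cnj c \<cdot>\<^sub>m (W * cH E) \<in> carrier_mat Nt Nt"
    "(c * cnj c) \<cdot>\<^sub>m (E * cH E) \<in> carrier_mat Nt Nt" using W E by auto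
  note C = R[THEN mat_rlinearD(1)[OF fisher_core_rlinear[OF S], OF _ R(1)]]
  show ?thesis
    unfolding FIM_eq_fisher_core mult_adjoint_perturb[OF W E] fisher_core_quadratic[OF S R] \<kappa>_def
    by (rule eq_matI) (use C in \<open>auto simp: algebra_simps\<close>)
qed

lemma has_real_derivative_mtrace_minv_FIM:
  assumes S: "sensing_dims Nt Nr M S" and W: "W \<in> carrier_mat Nt m" and ij: "i < Nt" "j < m"
    and inv: "invertible_mat (FIM M L ss2 S W)"
  shows "((\<lambda>t. mtrace (minv (FIM M L ss2 S (W + (c * complex_of_real t) \<cdot>\<^sub>m unitm Nt m i j))))
     has_real_derivative - Re (cnj c * ((Qmat M L ss2 S W + cH (Qmat M L ss2 S W)) * W) $$ (i,j))) (at 0)"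
proof -
  define E where "E = unitm Nt m i j"
  define \<kappa> where "\<kappa> = 2 * real L / ss2"
  define R1 where "R1 = c \<cdot>\<^sub>m (E * cH W) + cnj c \<cdot>\<^sub>m (W * cH E)"
  define R2 where "R2 = (c * cnj c) \<cdot>\<^sub>m (E * cH E)"
  have R: "R1 \<in> carrier_mat Nt Nt" "R2 \<in> carrier_mat Nt Nt" unfolding R1_def R2_def E_def using W by auto
  note C = mat_rlinearD(1)[OF fisher_core_rlinear[OF S] _ R(1)]
  note F = FIM_carrier[of M L ss2 S W]
  have d: "det (FIM M L ss2 S W) \<noteq> 0" by (rule invertible_mat_det_nonzero[OF inv F])
  have Q: "Qmat M L ss2 S W \<in> carrier_mat Nt Nt" using Q_core_carrier[OF S] by (simp add: Qmat_Q_core)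
  have "((\<lambda>t. mtrace (minv (FIM M L ss2 S W + t \<cdot>\<^sub>m (\<kappa> \<cdot>\<^sub>m fisher_core M S R1)
        + t^2 \<cdot>\<^sub>m (\<kappa> \<cdot>\<^sub>m fisher_core M S R2))))
     has_real_derivative - mtrace (minv (FIM M L ss2 S W) * (\<kappa> \<cdot>\<^sub>m fisher_core M S R1) * minv (FIM M L ss2 S W))) (at 0)"
    using R C by (intro has_real_derivative_mtrace_minv[OF F _ _ d]) auto
  moreover have "mtrace (minv (FIM M L ss2 S W) * (\<kappa> \<cdot>\<^sub>m fisher_core M S R1) * minv (FIM M L ss2 S W))
      = Re (cnj c * ((Qmat M L ss2 S W + cH (Qmat M L ss2 S W)) * W) $$ (i,j))"
    using mtrace_minv_fisher_minv[OF S W d R(1)] mtrace_mult_perturb[OF Q W ij]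
    by (simp add: \<kappa>_def R1_def E_def)
  ultimately show ?thesis
    unfolding FIM_perturb[OF S W unitm_carrier] E_def R1_def R2_def \<kappa>_def by simp
qed

lemma has_real_derivative_power_perturb:
  fixes c :: complex
  assumes W: "W \<in> carrier_mat n m" and ij: "i < n" "j < m"
  defines "V \<equiv> \<lambda>t. W + (c * complex_of_real t) \<cdot>\<^sub>m unitm n m i j"
  shows "((\<lambda>t. Re (mtrace (V t * cH (V t))) - Pt) has_real_derivative Re (cnj c * (2 * W $$ (i,j)))) (at 0)"
proof -
  define E where "E = unitm n m i j"
  define R1 where "R1 = c \<cdot>\<^sub>m (E * cH W) + cnj c \<cdot>\<^sub>m (W * cH E)"
  define R2 where "R2 = (c * cnj c) \<cdot>\<^sub>m (E * cH E)"
  have E: "E \<in> carrier_mat n m" by (simp add: E_def)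
  have R: "W * cH W \<in> carrier_mat n n" "R1 \<in> carrier_mat n n" "R2 \<in> carrier_mat n n"
    unfolding R1_def R2_def using W E by auto
  have eq: "Re (mtrace (V t * cH (V t))) - Pt = Re (mtrace (W * cH W)) + t * Re (mtrace R1) + t^2 * Re (mtrace R2) - Pt" for t
    unfolding V_def E_def[symmetric] mult_adjoint_perturb[OF W E] R1_def[symmetric] R2_def[symmetric]
    using R by (simp add: mtrace_add[of _ n] mtrace_smult[of _ n] del: of_real_power)
  have "Re (mtrace R1) = Re (cnj c * (2 * W $$ (i,j)))"
  proof -
    have "((1\<^sub>m n + 1\<^sub>m n) * W) $$ (i,j) = 2 * W $$ (i,j)"
      using add_mult_distrib_mat[OF one_carrier_mat one_carrier_mat W] W ij by simp
    then show ?thesis using mtrace_mult_perturb[OF one_carrier_mat W ij, of c] W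
      by (simp add: R1_def E_def)
  qed
  then show ?thesis unfolding eq by (auto intro!: derivative_eq_intros)
qed

lemma hw_Wc_of:
  "V \<in> carrier_mat Nt (K+Ns) \<Longrightarrow> H \<in> carrier_mat Nt K \<Longrightarrow> k < K \<Longrightarrow> j < K \<Longrightarrow>
    hw H (Wc_of K V) k j = (cH H * V) $$ (k,j)"
  by (simp add: hw_def index_mult_mat_sum Wc_of_def del: index_mult_mat(1))

lemma hw_Ws_of:
  "V \<in> carrier_mat Nt (K+Ns) \<Longrightarrow> H \<in> carrier_mat Nt K \<Longrightarrow> k < K \<Longrightarrow> j < Ns \<Longrightarrow>
    hw H (Ws_of K V) k j = (cH H * V) $$ (k,K+j)"
  by (simp add: hw_def index_mult_mat_sum Ws_of_def del: index_mult_mat(1))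

lemma Iint_eq_sum:
  assumes V: "V \<in> carrier_mat Nt (K+Ns)" and H: "H \<in> carrier_mat Nt K" and k: "k < K"
  shows "Iint K H sc2 V k = (\<Sum>j \<in> {..<K+Ns} - {k}. (cmod ((cH H * V) $$ (k,j)))^2) + sc2 k"
proof -
  define f where "f j = (cmod ((cH H * V) $$ (k,j)))^2" for j
  have "(\<Sum>j<Ns. f (K+j)) = (\<Sum>j \<in> {K..<K+Ns}. f j)"
    using sum.shift_bounds_nat_ivl[of f 0 K Ns] by (simp add: atLeast0LessThan add.commute)
  moreover have "(\<Sum>j \<in> {..<K+Ns} - {k}. f j) = (\<Sum>j \<in> {..<K} - {k}. f j) + (\<Sum>j \<in> {K..<K+Ns}. f j)"
  proof -
    have U: "{..<K+Ns} - {k} = ({..<K} - {k}) \<union> {K..<K+Ns}" using k by auto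
    show ?thesis unfolding U by (rule sum.union_disjoint) auto
  qed
  ultimately have "(\<Sum>j \<in> {..<K} - {k}. f j) + (\<Sum>j<Ns. f (K+j)) = (\<Sum>j \<in> {..<K+Ns} - {k}. f j)"
    by simp
  moreover have "dim_col (Ws_of K V) = Ns" using V by (simp add: Ws_of_def)
  ultimately show ?thesis
    using V H k by (simp add: Iint_def f_def hw_Wc_of hw_Ws_of)
qed

lemma Tk_eq_sum:
  assumes V: "V \<in> carrier_mat Nt (K+Ns)" and H: "H \<in> carrier_mat Nt K" and k: "k < K"
  shows "Tk K H sc2 V k = (\<Sum>j<K+Ns. (cmod ((cH H * V) $$ (k,j)))^2) + sc2 k"
  using sum.remove[of "{..<K+Ns}" k "\<lambda>j. (cmod ((cH H * V) $$ (k,j)))^2"] k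
  by (simp add: Tk_def Iint_eq_sum[OF assms] hw_Wc_of[OF assms k])

lemma Iint_pos:
  assumes "V \<in> carrier_mat Nt (K+Ns)" "H \<in> carrier_mat Nt K" "k < K" "\<forall>k<K. 0 < sc2 k"
  shows "0 < Iint K H sc2 V k"
  using assms by (simp add: Iint_eq_sum add_nonneg_pos sum_nonneg)

lemma rate_eq_ln_diff:
  assumes "0 < Iint K H sc2 W k"
  shows "rate K H sc2 W k = ln (Tk K H sc2 W k) - ln (Iint K H sc2 W k)"
proof -
  have "1 + (cmod (hw H (Wc_of K W) k k))^2 / Iint K H sc2 W k = Tk K H sc2 W k / Iint K H sc2 W k"
    using assms by (simp add: Tk_def field_simps)
  moreover have "0 < Tk K H sc2 W k" using assms by (simp add: Tk_def add_pos_nonneg)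
  ultimately show ?thesis using assms by (simp add: rate_def ln_div)
qed

lemma index_adjoint_mult_perturb:
  assumes W: "W \<in> carrier_mat Nt m" and H: "H \<in> carrier_mat Nt K" and k: "k < K" and j': "j' < m"
    and ij: "i < Nt" "j < m"
  shows "(cH H * (W + s \<cdot>\<^sub>m unitm Nt m i j)) $$ (k,j')
    = (cH H * W) $$ (k,j') + s * (if j' = j then cnj (H $$ (i,k)) else 0)"
proof -
  have "cH H * (W + s \<cdot>\<^sub>m unitm Nt m i j) = cH H * W + s \<cdot>\<^sub>m (cH H * unitm Nt m i j)"
    using mult_add_distrib_mat[OF mat_adjoint_carrier[OF H] W smult_carrier_mat[OF unitm_carrier]]
      mult_smult_distrib[OF mat_adjoint_carrier[OF H] unitm_carrier] by simp
  moreover have "(cH H * unitm Nt m i j) $$ (k,j') = (if j' = j then cnj (H $$ (i,k)) else 0)"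
    using index_mult_unitm[OF mat_adjoint_carrier[OF H] _ j' ij] k ij carrier_matD[OF H] by auto
  ultimately show ?thesis using k j' H W by simp
qed

lemma has_real_derivative_cmod_square:
  "((\<lambda>t. (cmod (a + (c * complex_of_real t) * e))^2) has_real_derivative 2 * Re (cnj a * (c * e))) (at 0)"
proof -
  have "(cmod (a + (c * complex_of_real t) * e))^2 = (Re a + t * Re (c*e))^2 + (Im a + t * Im (c*e))^2" for t
  proof -
    have "a + (c * complex_of_real t) * e = a + complex_of_real t * (c * e)" by (simp add: ac_simps)
    then show ?thesis by (simp add: cmod_power2 algebra_simps)
  qed
  moreover have "((\<lambda>t. (Re a + t * Re (c*e))^2 + (Im a + t * Im (c*e))^2) has_real_derivative
      2 * Re (cnj a * (c * e))) (at 0)"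
    by (auto intro!: derivative_eq_intros simp: algebra_simps)
  ultimately show ?thesis by simp
qed

lemma has_real_derivative_sum_cmod_square:
  assumes "finite A"
  shows "((\<lambda>t. \<Sum>l\<in>A. (cmod (a l + (c * complex_of_real t) * (if l = j then e else 0)))^2)
    has_real_derivative (if j \<in> A then 2 * Re (cnj (a j) * (c * e)) else 0)) (at 0)"
proof -
  have "((\<lambda>t. \<Sum>l\<in>A. (cmod (a l + (c * complex_of_real t) * (if l = j then e else 0)))^2)
    has_real_derivative (\<Sum>l\<in>A. if l = j then 2 * Re (cnj (a l) * (c * e)) else 0)) (at 0)"
    using has_real_derivative_cmod_square[of "a _" c] by (intro DERIV_sum) (auto simp: if_distrib cong: if_cong)
  then show ?thesis using assms by simp
qed

lemma rate_derivative_eq: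
  fixes c :: complex and i j :: nat
  assumes H: "H \<in> carrier_mat Nt K" and W: "W \<in> carrier_mat Nt (K+Ns)" and k: "k < K"
    and sc: "\<forall>k<K. 0 < sc2 k"
  defines "X \<equiv> Re (cnj c * (H $$ (i,k) * (cH H * W) $$ (k,j)))"
  shows "2 * X / Tk K H sc2 W k - (if j = k then 0 else 2 * X) / Iint K H sc2 W k
    = Re (cnj c * (2 * H $$ (i,k) * ((if j = k then cnj (eta K H sc2 W k) else 0)
        - complex_of_real (beta K H sc2 W k) * (cH H * W) $$ (k,j))))"
proof -
  define a where "a l = (cH H * W) $$ (k,l)" for l
  define I0 where "I0 = Iint K H sc2 W k"
  define s0 where "s0 = (cmod (a k))^2"
  have hw: "hw H (Wc_of K W) k k = a k" using hw_Wc_of[OF W H k k] by (simp add: a_def)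
  have I0: "0 < I0" using Iint_pos[OF W H k sc] by (simp add: I0_def)
  have T0: "Tk K H sc2 W k = I0 + s0" by (simp add: Tk_def I0_def s0_def hw)
  have eta: "cnj (eta K H sc2 W k) = a k / complex_of_real I0" by (simp add: eta_def hw I0_def)
  have beta: "beta K H sc2 W k = s0 / I0 / (I0 + s0)"
    by (simp add: beta_def xi_def Tk_def hw I0_def s0_def)
  have "complex_of_real I0 \<noteq> 0" using I0 by simp
  then have key: "cnj c * (2 * H $$ (i,k) * ((if j = k then a k / complex_of_real I0 else 0)
        - complex_of_real (s0 / I0 / (I0 + s0)) * a j))
      = complex_of_real ((if j = k then 2 / I0 else 0) - 2 * (s0 / I0 / (I0 + s0))) * (cnj c * (H $$ (i,k) * a j))"
    by (cases "j = k") (simp_all add: field_simps)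
  have Re_of_real_mult: "Re (complex_of_real r * w) = r * Re w" for r w by simp
  have "Re (cnj c * (2 * H $$ (i,k) * ((if j = k then cnj (eta K H sc2 W k) else 0)
      - complex_of_real (beta K H sc2 W k) * (cH H * W) $$ (k,j))))
    = ((if j = k then 2 / I0 else 0) - 2 * (s0 / I0 / (I0 + s0))) * X"
    unfolding a_def[symmetric] X_def by (simp only: eta beta key Re_of_real_mult)
  also have "\<dots> = 2 * X / Tk K H sc2 W k - (if j = k then 0 else 2 * X) / I0"
  proof -
    have pos: "0 < I0 + s0" using I0 by (simp add: s0_def add_pos_nonneg)
    then have "I0 * I0 + I0 * s0 \<noteq> 0" using I0 by (simp add: ring_distribs[symmetric])
    with pos show ?thesis using I0 T0 by (cases "j = k") (simp_all add: field_simps)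
  qed
  finally show ?thesis by (simp add: I0_def)
qed

text \<open>Perturbing \<open>W\<^sub>i\<^sub>j\<close> moves only column \<open>j\<close> of \<open>H\<^sup>H W\<close>, so \<open>T\<^sub>k\<close> and
  \<open>I\<^sub>k\<close> each contain at most one moving term.\<close>

lemma has_real_derivative_rate:
  assumes H: "H \<in> carrier_mat Nt K" and W: "W \<in> carrier_mat Nt (K+Ns)" and ij: "i < Nt" "j < K+Ns"
    and k: "k < K" and sc: "\<forall>k<K. 0 < sc2 k"
  shows "((\<lambda>t. rate K H sc2 (W + (c * complex_of_real t) \<cdot>\<^sub>m unitm Nt (K+Ns) i j) k) has_real_derivative
    Re (cnj c * (2 * H $$ (i,k) * ((if j = k then cnj (eta K H sc2 W k) else 0)
        - complex_of_real (beta K H sc2 W k) * (cH H * W) $$ (k,j))))) (at 0)"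
proof -
  define V where "V t = W + (c * complex_of_real t) \<cdot>\<^sub>m unitm Nt (K+Ns) i j" for t
  define a where "a l = (cH H * W) $$ (k,l)" for l
  define \<delta> where "\<delta> l = (if l = j then cnj (H $$ (i,k)) else 0)" for l
  define T where "T t = (\<Sum>l<K+Ns. (cmod (a l + (c * complex_of_real t) * \<delta> l))^2) + sc2 k" for t
  define I where "I t = (\<Sum>l \<in> {..<K+Ns} - {k}. (cmod (a l + (c * complex_of_real t) * \<delta> l))^2) + sc2 k" for t
  define X where "X = Re (cnj c * (H $$ (i,k) * a j))"
  have V: "V t \<in> carrier_mat Nt (K+Ns)" for t using W by (simp add: V_def)
  have Va: "(cH H * V t) $$ (k,l) = a l + (c * complex_of_real t) * \<delta> l" if "l < K+Ns" for t l
    using index_adjoint_mult_perturb[OF W H k that ij] by (simp add: V_def a_def \<delta>_def)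
  have TV: "Tk K H sc2 (V t) k = T t" and IV: "Iint K H sc2 (V t) k = I t" for t
    by (simp_all add: Tk_eq_sum[OF V H k] Iint_eq_sum[OF V H k] T_def I_def Va)
  have V0: "V 0 = W" using W by (intro eq_matI) (auto simp: V_def)
  have T_pos: "0 < T t" for t using sc k by (simp add: T_def add_nonneg_pos sum_nonneg)
  have I_pos: "0 < I t" for t using Iint_pos[OF V H k sc] IV by simp
  have "cnj (a j) * (c * cnj (H $$ (i,k))) = cnj (cnj c * (H $$ (i,k) * a j))" by simp
  then have "2 * Re (cnj (a j) * (c * cnj (H $$ (i,k)))) = 2 * X"
    unfolding X_def by (metis cnj.simps(1))
  then have dT: "(T has_real_derivative 2 * X) (at 0)"
    and dI: "(I has_real_derivative (if j = k then 0 else 2 * X)) (at 0)"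
    unfolding T_def[abs_def] I_def[abs_def] \<delta>_def using ij
    by (auto intro!: derivative_eq_intros has_real_derivative_sum_cmod_square[THEN DERIV_cong])
  have "((\<lambda>t. ln (T t) - ln (I t)) has_real_derivative 2 * X / T 0 - (if j = k then 0 else 2 * X) / I 0) (at 0)"
    using I_pos[of 0] T_pos[of 0] dT dI by (auto intro!: derivative_eq_intros)
  also have "2 * X / T 0 - (if j = k then 0 else 2 * X) / I 0 = Re (cnj c * (2 * H $$ (i,k) *
      ((if j = k then cnj (eta K H sc2 W k) else 0) - complex_of_real (beta K H sc2 W k) * (cH H * W) $$ (k,j))))"
    using rate_derivative_eq[OF H W k sc, of c i j, unfolded TV[of 0, unfolded V0] IV[of 0, unfolded V0]]
    by (simp only: X_def a_def)
  also have "(\<lambda>t. ln (T t) - ln (I t)) = (\<lambda>t. rate K H sc2 (V t) k)"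
    using rate_eq_ln_diff[of K H sc2 "V _" k] I_pos TV IV by simp
  finally show ?thesis unfolding V_def .
qed

lemma Sigma1_carrier: "Sigma1 K H sc2 W \<in> carrier_mat K K"
    and Sigma2_carrier: "Sigma2 K H sc2 W \<in> carrier_mat K K"
  by (simp_all add: Sigma1_def Sigma2_def diagc_def)

lemma index_mult_adjoint_Sigma1:
  assumes H: "H \<in> carrier_mat Nt K" and ij: "i < Nt" "j < K"
  shows "(H * cH (Sigma1 K H sc2 W)) $$ (i,j) = H $$ (i,j) * cnj (eta K H sc2 W j)"
proof -
  have S1: "Sigma1 K H sc2 W \<in> carrier_mat K K" by (simp add: Sigma1_def diagc_def)
  have "(H * cH (Sigma1 K H sc2 W)) $$ (i,j) = (\<Sum>k<K. H $$ (i,k) * cnj (Sigma1 K H sc2 W $$ (j,k)))"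
    using H S1 ij by (simp add: index_mult_mat_sum del: index_mult_mat(1))
  also have "\<dots> = (\<Sum>k<K. if k = j then H $$ (i,j) * cnj (eta K H sc2 W j) else 0)"
    using ij by (intro sum.cong refl) (auto simp: Sigma1_def diagc_def)
  also have "\<dots> = H $$ (i,j) * cnj (eta K H sc2 W j)" using ij by (simp add: sum.delta)
  finally show ?thesis .
qed

lemma index_Sigma2_form_mult:
  assumes H: "H \<in> carrier_mat Nt K" and W: "W \<in> carrier_mat Nt n" and ij: "i < Nt" "j < n"
  shows "(H * Sigma2 K H sc2 W * cH H * W) $$ (i,j) = (\<Sum>k<K. H$$(i,k) * complex_of_real (beta K H sc2 W k) * (cH H * W)$$(k,j))"
proof -
  have S2: "Sigma2 K H sc2 W \<in> carrier_mat K K" by (simp add: Sigma2_def diagc_def)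
  have HS: "H * Sigma2 K H sc2 W \<in> carrier_mat Nt K" using H S2 by auto
  have "H * Sigma2 K H sc2 W * cH H * W = (H * Sigma2 K H sc2 W) * (cH H * W)"
    using assoc_mult_mat[OF HS mat_adjoint_carrier[OF H] W] .
  moreover have "(H * Sigma2 K H sc2 W) $$ (i,k) = H$$(i,k) * complex_of_real (beta K H sc2 W k)" if "k < K" for k
  proof -
    have "(H * Sigma2 K H sc2 W) $$ (i,k) = (\<Sum>l<K. H $$ (i,l) * Sigma2 K H sc2 W $$ (l,k))"
      using H S2 ij that by (simp add: index_mult_mat_sum del: index_mult_mat(1))
    also have "\<dots> = (\<Sum>l<K. if l = k then H$$(i,k) * complex_of_real (beta K H sc2 W k) else 0)"
      using that by (intro sum.cong refl) (auto simp: Sigma2_def diagc_def)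
    finally show ?thesis using that by (simp add: sum.delta)
  qed
  moreover have "((H * Sigma2 K H sc2 W) * (cH H * W)) $$ (i,j) = (\<Sum>k<K. (H * Sigma2 K H sc2 W) $$ (i,k) * (cH H * W) $$ (k,j))"
    using index_mult_mat_sum[of i "H * Sigma2 K H sc2 W" j "cH H * W"] HS H W ij S2 by (simp del: index_mult_mat(1) assoc_mult_mat)
  ultimately show ?thesis by simp
qed

lemma sum_rate_gradient:
  assumes H: "H \<in> carrier_mat Nt K" and W: "W \<in> carrier_mat Nt (K+Ns)" and ij: "i < Nt" "j < K+Ns"
  shows "(\<Sum>k<K. 2 * H $$ (i,k) * ((if j = k then cnj (eta K H sc2 W k) else 0)
        - complex_of_real (beta K H sc2 W k) * (cH H * W) $$ (k,j)))
     = 2 * ((if j < K then (H * cH (Sigma1 K H sc2 W)) $$ (i,j) else 0) - (H * Sigma2 K H sc2 W * cH H * W) $$ (i,j))"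
proof -
  have "(\<Sum>k<K. 2 * H $$ (i,k) * ((if j = k then cnj (eta K H sc2 W k) else 0)
        - complex_of_real (beta K H sc2 W k) * (cH H * W) $$ (k,j)))
      = 2 * (\<Sum>k<K. if k = j then H $$ (i,j) * cnj (eta K H sc2 W j) else 0)
        - 2 * (\<Sum>k<K. H $$ (i,k) * complex_of_real (beta K H sc2 W k) * (cH H * W) $$ (k,j))"
    by (simp add: sum_subtractf sum_distrib_left algebra_simps if_distrib[of "\<lambda>x. _ * x"] cong: if_cong)
  then show ?thesis
    using index_mult_adjoint_Sigma1[OF H ij(1)] index_Sigma2_form_mult[OF H W ij] by (simp add: algebra_simps)
qed

lemma has_real_derivative_Lag:
  fixes dc ds mu :: real
  assumes S: "sensing_dims Nt Nr M S" and H: "H \<in> carrier_mat Nt K" and W: "W \<in> carrier_mat Nt (K+Ns)"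
    and ij: "i < Nt" "j < K+Ns" and sc: "\<forall>k<K. 0 < sc2 k" and inv: "invertible_mat (FIM M L ss2 S W)"
  defines "X \<equiv> complex_of_real mu \<cdot>\<^sub>m 1\<^sub>m Nt + complex_of_real dc \<cdot>\<^sub>m (H * Sigma2 K H sc2 W * cH H)
      - complex_of_real (ds / 2) \<cdot>\<^sub>m (Qmat M L ss2 S W + cH (Qmat M L ss2 S W))"
    and "D \<equiv> complex_of_real dc \<cdot>\<^sub>m (H * cH (Sigma1 K H sc2 W))"
  shows "((\<lambda>t. Lag K H sc2 M L ss2 S dc ds Pt (W + (c * complex_of_real t) \<cdot>\<^sub>m unitm Nt (K+Ns) i j) mu)
    has_real_derivative Re (cnj c * (2 * ((if j < K then D $$ (i,j) else 0) - (X * W) $$ (i,j))))) (at 0)"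
proof -
  define G where "G k = 2 * H $$ (i,k) * ((if j = k then cnj (eta K H sc2 W k) else 0)
        - complex_of_real (beta K H sc2 W k) * (cH H * W) $$ (k,j))" for k
  define Q where "Q = Qmat M L ss2 S W"
  define QW where "QW = ((Q + cH Q) * W) $$ (i,j)"
  have dR: "((\<lambda>t. \<Sum>k<K. rate K H sc2 (W + (c * complex_of_real t) \<cdot>\<^sub>m unitm Nt (K+Ns) i j) k)
      has_real_derivative (\<Sum>k<K. Re (cnj c * G k))) (at 0)"
    unfolding G_def by (intro DERIV_sum has_real_derivative_rate[OF H W ij _ sc]) simp
  have "((\<lambda>t. Lag K H sc2 M L ss2 S dc ds Pt (W + (c * complex_of_real t) \<cdot>\<^sub>m unitm Nt (K+Ns) i j) mu)
      has_real_derivative dc * (\<Sum>k<K. Re (cnj c * G k)) - ds * (- Re (cnj c * QW))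
        - mu * Re (cnj c * (2 * W $$ (i,j)))) (at 0)"
    unfolding Lag_def fobj_def QW_def Q_def
    by (intro DERIV_diff DERIV_cmult dR has_real_derivative_mtrace_minv_FIM[OF S W ij inv]
        has_real_derivative_power_perturb[OF W ij])
  moreover have "dc * (\<Sum>k<K. Re (cnj c * G k)) - ds * (- Re (cnj c * QW)) - mu * Re (cnj c * (2 * W $$ (i,j)))
     = Re (cnj c * (complex_of_real dc * (\<Sum>k<K. G k) + complex_of_real ds * QW - complex_of_real mu * (2 * W $$ (i,j))))"
    by (simp add: ring_distribs sum_distrib_left Re_sum mult.left_commute)
  moreover have "complex_of_real dc * (\<Sum>k<K. G k) + complex_of_real ds * QW - complex_of_real mu * (2 * W $$ (i,j))
      = 2 * ((if j < K then D $$ (i,j) else 0) - (X * W) $$ (i,j))"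
  proof -
    have Q: "Q \<in> carrier_mat Nt Nt" using Q_core_carrier[OF S] by (simp add: Q_def Qmat_Q_core)
    have B: "H * Sigma2 K H sc2 W * cH H \<in> carrier_mat Nt Nt"
      using mult_carrier_mat[OF mult_carrier_mat[OF H Sigma2_carrier] mat_adjoint_carrier[OF H]] .
    have XW: "(X * W) $$ (i,j) = complex_of_real mu * W $$ (i,j) + complex_of_real dc * (H * Sigma2 K H sc2 W * cH H * W) $$ (i,j)
        - complex_of_real (ds / 2) * QW"
      unfolding X_def QW_def Q_def[symmetric] using index_lincomb3_mult[OF B _ W ij, of "Q + cH Q"] Q B W
      by (simp add: assoc_mult_mat[OF _ mat_adjoint_carrier[OF H] W, of "H * Sigma2 K H sc2 W" Nt])
    moreover have Dj: "(if j < K then D $$ (i,j) else 0) = complex_of_real dc * (if j < K then (H * cH (Sigma1 K H sc2 W)) $$ (i,j) else 0)"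
      using H ij by (simp add: D_def Sigma1_def diagc_def)
    ultimately show ?thesis
      unfolding G_def sum_rate_gradient[OF H W ij] XW Dj by (simp add: field_simps)
  qed
  ultimately show ?thesis by simp
qed

lemma stationary_mult_eq:
  fixes dc ds mu :: real
  assumes S: "sensing_dims Nt Nr M S" and H: "H \<in> carrier_mat Nt K" and W: "W \<in> carrier_mat Nt (K+Ns)"
    and sc: "\<forall>k<K. 0 < sc2 k" and inv: "invertible_mat (FIM M L ss2 S W)"
    and stat: "grad_zero Nt (K + Ns) (\<lambda>V. Lag K H sc2 M L ss2 S dc ds Pt V mu) W"
    and ij: "i < Nt" "j < K+Ns"
  defines "X \<equiv> complex_of_real mu \<cdot>\<^sub>m 1\<^sub>m Nt + complex_of_real dc \<cdot>\<^sub>m (H * Sigma2 K H sc2 W * cH H)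
      - complex_of_real (ds / 2) \<cdot>\<^sub>m (Qmat M L ss2 S W + cH (Qmat M L ss2 S W))"
    and "D \<equiv> complex_of_real dc \<cdot>\<^sub>m (H * cH (Sigma1 K H sc2 W))"
  shows "(X * W) $$ (i,j) = (if j < K then D $$ (i,j) else 0)"
proof -
  define g where "g = (if j < K then D $$ (i,j) else 0) - (X * W) $$ (i,j)"
  note zero = stat[unfolded grad_zero_def, rule_format, OF ij]
  have Re_g: "Re (cnj c * (2 * g)) = 0"
    if "((\<lambda>t. Lag K H sc2 M L ss2 S dc ds Pt (W + (c * complex_of_real t) \<cdot>\<^sub>m unitm Nt (K+Ns) i j) mu)
      has_real_derivative 0) (at 0)" for c
    using DERIV_unique[OF has_real_derivative_Lag[OF S H W ij sc inv] that] unfolding g_def X_def D_def .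
  have "Re (cnj 1 * (2 * g)) = 0" by (rule Re_g) (use zero in simp)
  moreover have "Re (cnj \<i> * (2 * g)) = 0" by (rule Re_g) (use zero in simp)
  ultimately have "g = 0" by (simp add: complex_eq_iff)
  then show ?thesis by (simp add: g_def)
qed

lemma Wc_of_carrier: "W \<in> carrier_mat n (K+Ns) \<Longrightarrow> Wc_of K W \<in> carrier_mat n K"
    and Ws_of_carrier: "W \<in> carrier_mat n (K+Ns) \<Longrightarrow> Ws_of K W \<in> carrier_mat n Ns"
  by (simp_all add: Wc_of_def Ws_of_def)

lemma index_mult_Ws_of:
  "X \<in> carrier_mat Nt Nt \<Longrightarrow> W \<in> carrier_mat Nt (K+Ns) \<Longrightarrow> a < Nt \<Longrightarrow> b < Ns \<Longrightarrow>
   (X * Ws_of K W) $$ (a,b) = (X * W) $$ (a,K+b)"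
  by (simp add: index_mult_mat_sum Ws_of_def del: index_mult_mat(1))

lemma index_mult_Wc_of:
  "X \<in> carrier_mat Nt Nt \<Longrightarrow> W \<in> carrier_mat Nt (K+Ns) \<Longrightarrow> a < Nt \<Longrightarrow> b < K \<Longrightarrow>
   (X * Wc_of K W) $$ (a,b) = (X * W) $$ (a,b)"
  by (simp add: index_mult_mat_sum Wc_of_def del: index_mult_mat(1))

lemma mult_column_blocks:
  assumes X: "X \<in> carrier_mat n n" and W: "W \<in> carrier_mat n (K+Ns)" and C: "C \<in> carrier_mat n K"
    and e: "\<And>i j. i < n \<Longrightarrow> j < K+Ns \<Longrightarrow> (X * W) $$ (i,j) = (if j < K then C $$ (i,j) else 0)"
  shows "X * Wc_of K W = C" and "X * Ws_of K W = 0\<^sub>m n Ns"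
proof -
  show "X * Wc_of K W = C"
    using X W C e Wc_of_carrier[OF W] by (intro eq_matI) (auto simp: index_mult_Wc_of simp del: index_mult_mat(1))
  show "X * Ws_of K W = 0\<^sub>m n Ns"
    using X W e[of _ "K + _"] Ws_of_carrier[OF W] by (intro eq_matI) (auto simp: index_mult_Ws_of simp del: index_mult_mat(1))
qed

theorem theorem1:
  fixes Nt Nr K M L Ns :: nat
    and H :: "complex mat" and sc2 :: "nat \<Rightarrow> real" and ss2 dc ds Pt :: real
    and a b :: "nat \<Rightarrow> real \<Rightarrow> real \<Rightarrow> complex"
    and th ph :: "nat \<Rightarrow> real" and al :: "nat \<Rightarrow> complex"
    and W :: "complex mat" and mu :: real
  defines "S \<equiv> sensing_of Nt Nr M a b th ph al"
  assumes "0 < Nt" "0 < Nr" "0 < K" "0 < M" "0 < L"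
    and "H \<in> carrier_mat Nt K"
    and "\<forall>k<K. 0 < sc2 k" and "0 < ss2" and "0 \<le> dc" and "0 \<le> ds" and "0 < Pt"
    and "\<forall>i<Nt. \<forall>x. (\<lambda>p. a i (fst p) (snd p)) differentiable (at x)"
    and "\<forall>i<Nr. \<forall>x. (\<lambda>p. b i (fst p) (snd p)) differentiable (at x)"
    and "W \<in> carrier_mat Nt (K + Ns)"
    and "invertible_mat (FIM M L ss2 S W)"
    and "grad_zero Nt (K + Ns) (\<lambda>V. Lag K H sc2 M L ss2 S dc ds Pt V mu) W"
  shows "(((complex_of_real (ds / 2)) \<cdot>\<^sub>m (Qmat M L ss2 S W + cH (Qmat M L ss2 S W))
            - complex_of_real dc \<cdot>\<^sub>m (H * Sigma2 K H sc2 W * cH H)) * Ws_of K W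
         = complex_of_real mu \<cdot>\<^sub>m Ws_of K W)
    \<and> (invertible_mat (complex_of_real mu \<cdot>\<^sub>m 1\<^sub>m Nt + complex_of_real dc \<cdot>\<^sub>m (H * Sigma2 K H sc2 W * cH H)
            - complex_of_real (ds / 2) \<cdot>\<^sub>m (Qmat M L ss2 S W + cH (Qmat M L ss2 S W)))
         \<longrightarrow> Wc_of K W =
           minv (complex_of_real mu \<cdot>\<^sub>m 1\<^sub>m Nt + complex_of_real dc \<cdot>\<^sub>m (H * Sigma2 K H sc2 W * cH H)
            - complex_of_real (ds / 2) \<cdot>\<^sub>m (Qmat M L ss2 S W + cH (Qmat M L ss2 S W)))
           * (complex_of_real dc \<cdot>\<^sub>m (H * cH (Sigma1 K H sc2 W))))"
proof -
  \<comment> \<open>Only the shapes of \<open>H\<close> and \<open>W\<close>, \<open>\<sigma>\<^sub>c\<^sub>k\<^sup>2 > 0\<close> and the invertibility of \<open>F\<close>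
    are needed.\<close>
  note H = assms(7) and sc = assms(8) and W = assms(15) and inv = assms(16) and stat = assms(17)
  have S: "sensing_dims Nt Nr M S" unfolding assms(1) by (rule sensing_dims_sensing_of)
  define Q where "Q = Qmat M L ss2 S W"
  define B where "B = H * Sigma2 K H sc2 W * cH H"
  define X where
    "X = complex_of_real mu \<cdot>\<^sub>m 1\<^sub>m Nt + complex_of_real dc \<cdot>\<^sub>m B - complex_of_real (ds / 2) \<cdot>\<^sub>m (Q + cH Q)"
  define D where "D = complex_of_real dc \<cdot>\<^sub>m (H * cH (Sigma1 K H sc2 W))"
  have "Q \<in> carrier_mat Nt Nt" using Q_core_carrier[OF S] by (simp add: Q_def Qmat_Q_core)
  then have Q: "Q + cH Q \<in> carrier_mat Nt Nt" by simp
  have B: "B \<in> carrier_mat Nt Nt" unfolding B_def using H Sigma2_carrier by auto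
  have X: "X \<in> carrier_mat Nt Nt" unfolding X_def using B Q by (metis add_carrier_mat minus_carrier_mat one_carrier_mat smult_carrier_mat)
  have D: "D \<in> carrier_mat Nt K" unfolding D_def using H Sigma1_carrier by auto
  have "(X * W) $$ (i,j) = (if j < K then D $$ (i,j) else 0)" if "i < Nt" "j < K + Ns" for i j
    using stationary_mult_eq[OF S H W sc inv stat that] unfolding X_def D_def Q_def B_def .
  note blocks = mult_column_blocks[OF X W D this]
  have "(complex_of_real (ds / 2) \<cdot>\<^sub>m (Q + cH Q) - complex_of_real dc \<cdot>\<^sub>m B) * Ws_of K W
      = complex_of_real mu \<cdot>\<^sub>m Ws_of K W"
    using eigen_of_lincomb_mult_zero[OF B Q Ws_of_carrier[OF W]] blocks(2) unfolding X_def .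
  moreover have "invertible_mat X \<longrightarrow> Wc_of K W = minv X * D"
    using eq_minv_mult[OF X _ Wc_of_carrier[OF W] blocks(1)] by blast
  ultimately show ?thesis unfolding X_def D_def Q_def B_def by blast
qed

end
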